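(* Let $n\ge2$, $H=u^\perp+t_0u$ with $u\in S^{n-1}$, $t_0\in\mathbb{R}$, and let $\diamond_k\in\mathcal J_H(\mathcal K^n_n)$, $k=0,1,2,\dots$, with associated contractions $\varphi_{\diamond_k}$. (i) If $\diamond_k\to\diamond_0$ as $k\to\infty$ (i.e. $\|1_{\diamond_kK}-1_{\diamond_0K}\|_1\to0$ for all $K\in\mathcal K^n_n$), then $\varphi_{\diamond_k}\to\varphi_{\diamond_0}$ pointwise. (ii) If $\varphi_{\diamond_k}\to\varphi$ pointwise as $k\to\infty$ for some function $\varphi$, then there is an essentially unique $\diamond\in\mathcal J_H(\mathcal K^n_n)$ with associated contraction $\varphi_\diamond=\varphi$ such that $\diamond_k\to\diamond$.
   Context: $\mathcal K^n_n$: convex bodies in $\mathbb{R}^n$. $\mathcal J_H(\mathcal K^n_n)$: maps $\diamond:\mathcal K^n_n\to\mathcal L^n$ (measurable sets of finite measure) that are monotonic up to null sets, measure preserving, map balls to balls (up to null sets), and respect $H$-cylinders (if $A\subset(B(x,r)\cap H)+H^\perp$ essentially then $\diamond A\subset(B(x,r)\cap H)+H^\perp$ essentially). For such $\diamond$, $\varphi_\diamond:\mathbb{R}\to\mathbb{R}$ is the contraction with $\diamond B(x+tu,r)=B(x+\varphi_\diamond(t)u,r)$ essentially for all $x\in u^\perp$, $t\in\mathbb{R}$, $r>0$. *)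

theory Defs
  imports "HOL-Analysis.Analysis"
begin

definition convex_body :: "'a::euclidean_space set \<Rightarrow> bool" where
  "convex_body K \<longleftrightarrow> compact K \<and> convex K \<and> interior K \<noteq> {}"

definition fin_meas :: "'a::euclidean_space set \<Rightarrow> bool" where
  "fin_meas A \<longleftrightarrow> A \<in> sets lebesgue \<and> emeasure lebesgue A < \<infinity>"

definition ae_subset :: "'a::euclidean_space set \<Rightarrow> 'a set \<Rightarrow> bool" where
  "ae_subset A B \<longleftrightarrow> A - B \<in> null_sets lebesgue"

definition ae_eq :: "'a::euclidean_space set \<Rightarrow> 'a set \<Rightarrow> bool" where
  "ae_eq A B \<longleftrightarrow> ae_subset A B \<and> ae_subset B A"

definition hyperplane :: "'a::euclidean_space \<Rightarrow> real \<Rightarrow> 'a set" where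
  "hyperplane u t0 = {y. y \<bullet> u = t0}"

definition hcyl :: "'a::euclidean_space \<Rightarrow> real \<Rightarrow> 'a \<Rightarrow> real \<Rightarrow> 'a set" where
  "hcyl u t0 x r = {z + s *\<^sub>R u | z s. z \<in> cball x r \<inter> hyperplane u t0}"

text \<open>The class J_H(K^n_n); maps are total on sets, but only their behaviour on
  convex bodies matters.\<close>
definition JH :: "'a::euclidean_space \<Rightarrow> real \<Rightarrow> ('a set \<Rightarrow> 'a set) set" where
  "JH u t0 = {D. (\<forall>K. convex_body K \<longrightarrow> fin_meas (D K))
     \<and> (\<forall>K L. convex_body K \<and> convex_body L \<and> K \<subseteq> L \<longrightarrow> ae_subset (D K) (D L))
     \<and> (\<forall>K. convex_body K \<longrightarrow> emeasure lebesgue (D K) = emeasure lebesgue K)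
     \<and> (\<forall>x r. r > 0 \<longrightarrow> (\<exists>y s. s > 0 \<and> ae_eq (D (cball x r)) (cball y s)))
     \<and> (\<forall>A x r. convex_body A \<and> r > 0 \<and> ae_subset A (hcyl u t0 x r)
           \<longrightarrow> ae_subset (D A) (hcyl u t0 x r))}"

definition assoc_contraction :: "'a::euclidean_space \<Rightarrow> ('a set \<Rightarrow> 'a set) \<Rightarrow> (real \<Rightarrow> real) \<Rightarrow> bool" where
  "assoc_contraction u D phi \<longleftrightarrow>
     (\<forall>x t r. x \<bullet> u = 0 \<and> r > 0 \<longrightarrow>
        ae_eq (D (cball (x + t *\<^sub>R u) r)) (cball (x + phi t *\<^sub>R u) r))"

text \<open>D_k \<rightarrow> D: the L1 distance of indicators (= measure of symmetric difference) tends to 0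
  for every convex body.\<close>
definition map_conv :: "(nat \<Rightarrow> 'a::euclidean_space set \<Rightarrow> 'a set) \<Rightarrow> ('a set \<Rightarrow> 'a set) \<Rightarrow> bool" where
  "map_conv Ds D \<longleftrightarrow> (\<forall>K. convex_body K \<longrightarrow>
     ((\<lambda>k. emeasure lebesgue ((Ds k K - D K) \<union> (D K - Ds k K))) \<longlongrightarrow> 0) sequentially)"

end

theory Submission
  imports Defs
begin

lemma subset_imp_ae_subset:
  assumes "A \<subseteq> B" shows "ae_subset A B"
proof -
  have empty: "A - B = {}" using assms by blast
  show ?thesis unfolding ae_subset_def empty by simp
qed

lemma ae_subset_trans: "ae_subset A B \<Longrightarrow> ae_subset B C \<Longrightarrow> ae_subset A C"
  unfolding ae_subset_def by (rule completion.complete2[of _ "(A - B) \<union> (B - C)"]) auto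

lemma ae_subset_Int: "ae_subset A B \<Longrightarrow> ae_subset (A \<inter> C) (B \<inter> C)"
  unfolding ae_subset_def by (rule completion.complete2[of _ "A - B"]) auto

lemma ae_eq_refl: "ae_eq A A"
  by (simp add: ae_eq_def ae_subset_def)

lemma sets_borel_imp_sets_lebesgue: "A \<in> sets borel \<Longrightarrow> A \<in> sets lebesgue"
  by (metis sets_completionI_sets sets_lborel)

lemma convex_body_cball: "0 < r \<Longrightarrow> convex_body (cball c r)"
  by (auto simp: convex_body_def)

lemma convex_body_lmeasurable: "convex_body K \<Longrightarrow> K \<in> lmeasurable"
  by (simp add: convex_body_def lmeasurable_compact)

lemma closure_interior_convex_body: "convex_body K \<Longrightarrow> closure (interior K) = K"
  by (simp add: convex_body_def convex_closure_interior compact_imp_closed closure_closed)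

lemma ae_subset_closed_imp_subset:
  assumes K: "convex_body K" and C: "closed C" and KC: "ae_subset K C"
  shows "K \<subseteq> C"
proof -
  have "interior K - C \<in> null_sets lebesgue"
    by (rule completion.complete2[OF _ KC[unfolded ae_subset_def]]) (use interior_subset in blast)
  then have "interior K - C = {}"
    using open_not_negligible[of "interior K - C"] C by (auto simp: negligible_iff_null_sets)
  then have "closure (interior K) \<subseteq> C"
    using C by (simp add: closure_minimal)
  then show ?thesis
    using closure_interior_convex_body[OF K] by simp
qed

lemma emeasure_symdiff_ae_cong:
  assumes "A \<in> sets lebesgue" "A' \<in> sets lebesgue" "B \<in> sets lebesgue" "B' \<in> sets lebesgue"
    and "ae_eq A A'" "ae_eq B B'"
  shows "emeasure lebesgue ((A - B) \<union> (B - A)) = emeasure lebesgue ((A' - B') \<union> (B' - A'))"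
proof (rule emeasure_eq_AE)
  have "(A - A') \<union> (A' - A) \<union> (B - B') \<union> (B' - B) \<in> null_sets lebesgue"
    using assms(5,6) by (auto simp: ae_eq_def ae_subset_def)
  then show "AE x in lebesgue. (x \<in> (A - B) \<union> (B - A)) = (x \<in> (A' - B') \<union> (B' - A'))"
    by (rule AE_I') auto
qed (use assms in auto)

definition proj_perp :: "'a::real_inner \<Rightarrow> 'a \<Rightarrow> 'a" where
  "proj_perp u z = z - (z \<bullet> u) *\<^sub>R u"

lemma proj_perp_add_inner: "proj_perp u z + (z \<bullet> u) *\<^sub>R u = z"
  by (simp add: proj_perp_def)

lemma linear_proj_perp: "linear (proj_perp u)"
  by (rule linearI) (simp_all add: proj_perp_def inner_add_left algebra_simps)
  
lemma continuous_on_proj_perp: "continuous_on S (proj_perp u)"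
  unfolding proj_perp_def by (intro continuous_intros)

lemma inner_proj_perp_commute: "proj_perp u b \<bullet> z = b \<bullet> proj_perp u z"
  by (simp add: proj_perp_def inner_diff_left inner_diff_right inner_commute)

context
  fixes u :: "'a::euclidean_space"
  assumes unit: "norm u = 1"
begin

lemma inner_unit_self [simp]: "u \<bullet> u = 1"
  using unit by (simp add: dot_square_norm)

lemma proj_perp_orthogonal [simp]: "proj_perp u z \<bullet> u = 0"
  by (simp add: proj_perp_def inner_diff_left)

lemma proj_perp_add_scaleR [simp]: "proj_perp u (z + s *\<^sub>R u) = proj_perp u z"
  by (simp add: proj_perp_def inner_add_left algebra_simps)

lemma proj_perp_fixed: "y \<bullet> u = 0 \<Longrightarrow> proj_perp u y = y"
  by (simp add: proj_perp_def)

lemma norm_power2_proj_perp: "norm z ^ 2 = norm (proj_perp u z) ^ 2 + (z \<bullet> u) ^ 2"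
proof -
  have "orthogonal (proj_perp u z) ((z \<bullet> u) *\<^sub>R u)"
    by (simp add: orthogonal_def)
  then have "norm (proj_perp u z + (z \<bullet> u) *\<^sub>R u) ^ 2 = norm (proj_perp u z) ^ 2 + (z \<bullet> u) ^ 2"
    using unit by (simp add: norm_add_Pythagorean)
  then show ?thesis
    by (simp only: proj_perp_add_inner)
qed

end

definition shift_along :: "'a::real_vector \<Rightarrow> ('a \<Rightarrow> real) \<Rightarrow> 'a set \<Rightarrow> 'a set" where
  "shift_along u g A = {z. z - g z *\<^sub>R u \<in> A}"

definition invariant_along :: "'a::real_vector \<Rightarrow> ('a \<Rightarrow> 'b) \<Rightarrow> bool" where
  "invariant_along u g \<longleftrightarrow> (\<forall>z s. g (z + s *\<^sub>R u) = g z)"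

lemma invariant_alongD:
  assumes "invariant_along u g"
  shows "g (z + s *\<^sub>R u) = g z" "g (z - s *\<^sub>R u) = g z"
  using assms[unfolded invariant_along_def, rule_format, of z s]
    assms[unfolded invariant_along_def, rule_format, of z "- s"] by simp_all

lemma shift_along_mono: "A \<subseteq> B \<Longrightarrow> shift_along u g A \<subseteq> shift_along u g B"
  unfolding shift_along_def by auto

lemma shift_along_Diff: "shift_along u g (A - B) = shift_along u g A - shift_along u g B"
  unfolding shift_along_def by auto

lemma shift_along_Un: "shift_along u g (A \<union> B) = shift_along u g A \<union> shift_along u g B"
  unfolding shift_along_def by auto

lemma shift_along_shift_along:
  assumes "invariant_along u e"
  shows "shift_along u g (shift_along u e A) = shift_along u (\<lambda>z. g z + e z) A"
  unfolding shift_along_def using invariant_alongD(2)[OF assms] by (auto simp: algebra_simps)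

lemma sets_borel_shift_along:
  fixes u :: "'a::euclidean_space"
  assumes [measurable]: "g \<in> borel_measurable borel" and A: "A \<in> sets borel"
  shows "shift_along u g A \<in> sets borel"
proof -
  have "shift_along u g A = (\<lambda>z. z - g z *\<^sub>R u) -` A \<inter> space borel"
    by (auto simp: shift_along_def)
  also have "\<dots> \<in> sets borel"
    by (rule measurable_sets[OF _ A]) measurable
  finally show ?thesis .
qed

text \<open>A shift by a function with countably many values translates each of the countably many
  level sets rigidly, so it preserves Lebesgue measure.\<close>
lemma
  fixes u :: "'a::euclidean_space"
  assumes g [measurable]: "g \<in> borel_measurable borel" and inv: "invariant_along u g"
    and cnt: "countable (range g)" and A: "A \<in> sets lebesgue"
  shows sets_lebesgue_shift_along_countable: "shift_along u g A \<in> sets lebesgue"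
    and emeasure_shift_along_countable:
      "emeasure lebesgue (shift_along u g A) = emeasure lebesgue A"
proof -
  define C where "C c = {z. g z = c}" for c
  have C: "C c \<in> sets lebesgue" for c
    unfolding C_def by (rule sets_borel_imp_sets_lebesgue) measurable
  have piece: "shift_along u g A \<inter> C c = (+) (c *\<^sub>R u) ` (A \<inter> C c)" for c
  proof safe
    fix z assume z: "z \<in> shift_along u g A" "z \<in> C c"
    then have "z - c *\<^sub>R u \<in> A \<inter> C c"
      using invariant_alongD(2)[OF inv] by (auto simp: shift_along_def C_def)
    then show "z \<in> (+) (c *\<^sub>R u) ` (A \<inter> C c)"
      by (rule rev_image_eqI) simp
  qed (use invariant_alongD(1)[OF inv] in \<open>auto simp: shift_along_def C_def add.commute\<close>)
  have pieces: "X = (\<Union>c\<in>range g. X \<inter> C c)" for X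
    by (auto simp: C_def)
  have disj: "disjoint_family_on (\<lambda>c. X \<inter> C c) (range g)" for X
    by (auto simp: disjoint_family_on_def C_def)
  have piece_sets: "shift_along u g A \<inter> C c \<in> sets lebesgue" for c
    unfolding piece by (rule lebesgue_sets_translation) (use A C in auto)
  have "(\<Union>c\<in>range g. shift_along u g A \<inter> C c) \<in> sets lebesgue"
    using piece_sets cnt by (intro sets.countable_UN') auto
  then show "shift_along u g A \<in> sets lebesgue"
    using pieces by metis
  have "emeasure lebesgue (shift_along u g A)
      = emeasure lebesgue (\<Union>c\<in>range g. shift_along u g A \<inter> C c)"
    using pieces by metis
  also have "\<dots> = (\<integral>\<^sup>+c. emeasure lebesgue (shift_along u g A \<inter> C c) \<partial>count_space (range g))"
    by (rule emeasure_UN_countable) (use piece_sets cnt disj in auto)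
  also have "\<dots> = (\<integral>\<^sup>+c. emeasure lebesgue (A \<inter> C c) \<partial>count_space (range g))"
  proof (rule nn_integral_cong)
    fix c
    show "emeasure lebesgue (shift_along u g A \<inter> C c) = emeasure lebesgue (A \<inter> C c)"
      using emeasure_lebesgue_affine[of 1 "c *\<^sub>R u" "A \<inter> C c"] by (simp add: piece add.commute)
  qed
  also have "\<dots> = emeasure lebesgue (\<Union>c\<in>range g. A \<inter> C c)"
    by (rule emeasure_UN_countable[symmetric]) (use A C cnt disj in auto)
  also have "\<dots> = emeasure lebesgue A"
    using pieces by metis
  finally show "emeasure lebesgue (shift_along u g A) = emeasure lebesgue A" .
qed

definition dilate_along :: "'a::real_vector \<Rightarrow> real \<Rightarrow> 'a set \<Rightarrow> 'a set" where
  "dilate_along u d K = K + (\<lambda>t. t *\<^sub>R u) ` {-d..d}"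

definition erode_along :: "'a::real_vector \<Rightarrow> real \<Rightarrow> 'a set \<Rightarrow> 'a set" where
  "erode_along u d K = {p. \<forall>t\<in>{-d..d}. p + t *\<^sub>R u \<in> K}"

lemma mem_dilate_along: "z \<in> dilate_along u d K \<longleftrightarrow> (\<exists>t\<in>{-d..d}. z - t *\<^sub>R u \<in> K)"
proof
  assume "z \<in> dilate_along u d K"
  then obtain p t where "p \<in> K" "t \<in> {-d..d}" "z = p + t *\<^sub>R u"
    unfolding dilate_along_def by (auto elim!: set_plus_elim)
  then show "\<exists>t\<in>{-d..d}. z - t *\<^sub>R u \<in> K"
    by (intro bexI[of _ t]) auto
next
  assume "\<exists>t\<in>{-d..d}. z - t *\<^sub>R u \<in> K"
  then obtain t where "t \<in> {-d..d}" "z - t *\<^sub>R u \<in> K" by blast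
  then have "(z - t *\<^sub>R u) + t *\<^sub>R u \<in> dilate_along u d K"
    unfolding dilate_along_def by (intro set_plus_intro) auto
  then show "z \<in> dilate_along u d K" by simp
qed

lemma subset_dilate_along: "0 \<le> d \<Longrightarrow> K \<subseteq> dilate_along u d K"
  by (auto simp: mem_dilate_along intro!: bexI[of _ 0])

lemma erode_along_subset: "0 \<le> d \<Longrightarrow> erode_along u d K \<subseteq> K"
  unfolding erode_along_def by (auto dest!: bspec[of _ _ 0])

lemma dilate_along_mono: "d \<le> d' \<Longrightarrow> dilate_along u d K \<subseteq> dilate_along u d' K"
  by (force simp: mem_dilate_along)

lemma erode_along_antimono: "d \<le> d' \<Longrightarrow> erode_along u d' K \<subseteq> erode_along u d K"
  by (force simp: erode_along_def)

lemma shift_along_between_erode_dilate: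
  assumes "\<And>z. \<bar>e z\<bar> \<le> d"
  shows "erode_along u d K \<subseteq> shift_along u e K" "shift_along u e K \<subseteq> dilate_along u d K"
proof -
  show "erode_along u d K \<subseteq> shift_along u e K"
  proof
    fix z assume "z \<in> erode_along u d K"
    then have "z + (- e z) *\<^sub>R u \<in> K"
      using assms[of z] unfolding erode_along_def by (auto dest!: bspec[of _ _ "- e z"])
    then show "z \<in> shift_along u e K" by (simp add: shift_along_def)
  qed
  show "shift_along u e K \<subseteq> dilate_along u d K"
    using assms by (force simp: shift_along_def mem_dilate_along abs_le_iff)
qed

lemma compact_dilate_along:
  fixes u :: "'a::real_normed_vector"
  assumes "compact K"
  shows "compact (dilate_along u d K)"
proof -
  have "dilate_along u d K = (\<Union>p\<in>K. \<Union>q\<in>(\<lambda>t. t *\<^sub>R u) ` {-d..d}. {p + q})"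
    by (auto simp: dilate_along_def set_plus_def)
  also have "compact \<dots>"
    using assms by (intro compact_sums' compact_continuous_image) (auto intro!: continuous_intros)
  finally show ?thesis .
qed

lemma convex_dilate_along: "convex K \<Longrightarrow> convex (dilate_along u d K)"
  unfolding dilate_along_def
  by (intro convex_set_plus convex_linear_image) (auto intro: linearI simp: scaleR_add_left)

lemma compact_erode_along:
  fixes u :: "'a::real_normed_vector"
  assumes "compact K" "0 \<le> d"
  shows "compact (erode_along u d K)"
proof -
  have eq: "erode_along u d K = (\<Inter>t\<in>{-d..d}. (\<lambda>p. p + t *\<^sub>R u) -` K)"
    by (auto simp: erode_along_def)
  have "closed (erode_along u d K)"
    unfolding eq using assms(1) by (intro closed_INT ballI continuous_closed_vimage)
      (auto intro!: continuous_intros compact_imp_closed)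
  then have "compact (K \<inter> erode_along u d K)"
    by (rule compact_Int_closed[OF assms(1)])
  moreover have "K \<inter> erode_along u d K = erode_along u d K"
    using erode_along_subset[OF assms(2)] by blast
  ultimately show ?thesis by simp
qed

lemma convex_erode_along:
  assumes "convex K"
  shows "convex (erode_along u d K)"
proof (rule convexI)
  fix x y and a b :: real
  assume xy: "x \<in> erode_along u d K" "y \<in> erode_along u d K" and ab: "0 \<le> a" "0 \<le> b" "a + b = 1"
  have "a *\<^sub>R x + b *\<^sub>R y + t *\<^sub>R u \<in> K" if t: "t \<in> {-d..d}" for t
  proof -
    have "a *\<^sub>R (x + t *\<^sub>R u) + b *\<^sub>R (y + t *\<^sub>R u) \<in> K"
      using xy t ab by (intro convexD[OF assms]) (auto simp: erode_along_def)
    moreover have "a *\<^sub>R (x + t *\<^sub>R u) + b *\<^sub>R (y + t *\<^sub>R u) = a *\<^sub>R x + b *\<^sub>R y + (a + b) *\<^sub>R t *\<^sub>R u"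
      by (simp add: algebra_simps)
    then have "a *\<^sub>R (x + t *\<^sub>R u) + b *\<^sub>R (y + t *\<^sub>R u) = a *\<^sub>R x + b *\<^sub>R y + t *\<^sub>R u"
      using ab(3) by simp
    ultimately show ?thesis by simp
  qed
  then show "a *\<^sub>R x + b *\<^sub>R y \<in> erode_along u d K"
    by (simp add: erode_along_def)
qed

context
  fixes u :: "'a::euclidean_space"
  assumes unit: "norm u = 1"
begin

lemma tendsto_measure_dilate_along:
  assumes K: "compact K"
  shows "(\<lambda>j. measure lebesgue (dilate_along u (1 / real (Suc j)) K)) \<longlonglongrightarrow> measure lebesgue K"
proof -
  let ?A = "\<lambda>j. dilate_along u (1 / real (Suc j)) K"
  have "z \<in> K" if z: "z \<in> (\<Inter>j. ?A j)" for z
  proof -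
    have "\<exists>p\<in>K. dist p z < e" if "0 < e" for e
    proof -
      obtain j where j: "1 / real (Suc j) < e"
        using nat_approx_posE[OF \<open>0 < e\<close>] by blast
      have "z \<in> ?A j" using z by blast
      then obtain t where t: "t \<in> {- (1 / real (Suc j))..1 / real (Suc j)}" "z - t *\<^sub>R u \<in> K"
        unfolding mem_dilate_along by blast
      have "dist (z - t *\<^sub>R u) z = \<bar>t\<bar>"
        using unit by (simp add: dist_norm)
      also have "\<dots> < e"
        using t(1) j by (auto simp: abs_le_iff)
      finally show ?thesis
        using t(2) by blast
    qed
    then show "z \<in> K"
      using closed_approachable[OF compact_imp_closed[OF K]] by blast
  qed
  moreover have "K \<subseteq> ?A j" for j
    by (rule subset_dilate_along) simp
  ultimately have "(\<Inter>j. ?A j) = K"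
    by blast
  moreover have "(\<lambda>j. measure lebesgue (?A j)) \<longlonglongrightarrow> measure lebesgue (\<Inter>j. ?A j)"
  proof (rule Lim_measure_decseq)
    have lm: "?A j \<in> lmeasurable" for j
      by (rule lmeasurable_compact[OF compact_dilate_along[OF K]])
    then show "range ?A \<subseteq> sets lebesgue"
      using fmeasurableD by blast
    show "emeasure lebesgue (?A j) \<noteq> \<infinity>" for j
      using fmeasurableD2[OF lm] by (metis infinity_ennreal_def)
    show "antimono_on UNIV ?A"
      by (intro antimonoI dilate_along_mono frac_le) auto
  qed
  ultimately show ?thesis by simp
qed

lemma tendsto_measure_erode_along:
  assumes K: "compact K" "convex K"
  shows "(\<lambda>j. measure lebesgue (erode_along u (1 / real (Suc j)) K)) \<longlonglongrightarrow> measure lebesgue K"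
proof -
  let ?A = "\<lambda>j. erode_along u (1 / real (Suc j)) K"
  have union_sub: "(\<Union>j. ?A j) \<subseteq> K"
    by (intro UN_least erode_along_subset) simp
  have interior_sub: "interior K \<subseteq> (\<Union>j. ?A j)"
  proof
    fix z assume "z \<in> interior K"
    then obtain e where e: "0 < e" "ball z e \<subseteq> K"
      unfolding mem_interior by blast
    obtain j where j: "1 / real (Suc j) < e"
      using nat_approx_posE[OF e(1)] by blast
    have "z + t *\<^sub>R u \<in> K" if t: "t \<in> {- (1 / real (Suc j))..1 / real (Suc j)}" for t
    proof -
      have "dist z (z + t *\<^sub>R u) = \<bar>t\<bar>"
        using unit by (simp add: dist_norm)
      also have "\<dots> < e"
        using t j by (auto simp: abs_le_iff)
      finally show ?thesis
        using e(2) mem_ball by blast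
    qed
    then have "z \<in> ?A j"
      by (simp add: erode_along_def)
    then show "z \<in> (\<Union>j. ?A j)" by blast
  qed
  have lm: "?A j \<in> lmeasurable" for j
    using lmeasurable_compact[OF compact_erode_along[OF K(1)]] by simp
  then have union_sets: "(\<Union>j. ?A j) \<in> sets lebesgue"
    by (intro sets.countable_UN) auto
  have K_lm: "K \<in> lmeasurable"
    using lmeasurable_compact[OF K(1)] .
  have "measure lebesgue K = measure lebesgue (interior K)"
    using measure_interior[OF compact_imp_bounded[OF K(1)] negligible_convex_frontier[OF K(2)]] ..
  also have "\<dots> \<le> measure lebesgue (\<Union>j. ?A j)"
    by (rule measure_mono_fmeasurable[OF interior_sub])
      (use union_sets union_sub K_lm in \<open>auto intro: fmeasurableI2 sets_borel_imp_sets_lebesgue\<close>)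
  finally have "measure lebesgue (\<Union>j. ?A j) = measure lebesgue K"
    using measure_mono_fmeasurable[OF union_sub union_sets K_lm] by linarith
  moreover have "(\<lambda>j. measure lebesgue (?A j)) \<longlonglongrightarrow> measure lebesgue (\<Union>j. ?A j)"
  proof (rule Lim_measure_incseq)
    show "range ?A \<subseteq> sets lebesgue"
      using lm by auto
    show "incseq ?A"
      by (intro monoI erode_along_antimono frac_le) auto
    show "emeasure lebesgue (\<Union>j. ?A j) \<noteq> \<infinity>"
      using fmeasurableD2[OF fmeasurableI2[OF K_lm union_sub union_sets]]
      by (metis infinity_ennreal_def)
  qed
  ultimately show ?thesis by simp
qed

text \<open>The shift by \<open>g\<close> is the shift by a step function \<open>g\<^sub>\<delta>\<close> (which preserves measure) after a
  shift by at most \<open>\<delta>\<close>, which keeps the set between its \<open>\<delta>\<close>-erosion and \<open>\<delta>\<close>-dilation.\<close>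
lemma
  assumes g: "g \<in> borel_measurable borel" "invariant_along u g"
    and L: "compact L" "convex L"
  shows lmeasurable_shift_along: "shift_along u g L \<in> lmeasurable"
    and measure_shift_along: "measure lebesgue (shift_along u g L) = measure lebesgue L"
proof -
  have sets: "shift_along u g L \<in> sets lebesgue"
    using sets_borel_shift_along[OF g(1) borel_compact[OF L(1)]] by (rule sets_borel_imp_sets_lebesgue)
  have bounds: "shift_along u g L \<in> lmeasurable
      \<and> measure lebesgue (erode_along u d L) \<le> measure lebesgue (shift_along u g L)
      \<and> measure lebesgue (shift_along u g L) \<le> measure lebesgue (dilate_along u d L)"
    if d: "0 < d" for d
  proof -
    define g\<^sub>d where "g\<^sub>d z = d * of_int \<lfloor>g z / d\<rfloor>" for z
    define e where "e z = g z - g\<^sub>d z" for z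
    have e_bound: "\<bar>e z\<bar> \<le> d" for z
    proof -
      have "of_int \<lfloor>g z / d\<rfloor> \<le> g z / d" "g z / d < of_int \<lfloor>g z / d\<rfloor> + 1"
        by linarith+
      then have "g\<^sub>d z \<le> g z" "g z < g\<^sub>d z + d"
        using d by (simp_all add: g\<^sub>d_def le_divide_eq divide_less_eq algebra_simps)
      then show ?thesis
        by (simp add: e_def)
    qed
    have inv: "invariant_along u g\<^sub>d" "invariant_along u e"
      using g(2) by (simp_all add: invariant_along_def g\<^sub>d_def e_def)
    have "range g\<^sub>d \<subseteq> range (\<lambda>j::int. d * of_int j)"
      by (auto simp: g\<^sub>d_def)
    then have cnt: "countable (range g\<^sub>d)"
      by (rule countable_subset) simp
    have meas: "g\<^sub>d \<in> borel_measurable borel"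
      unfolding g\<^sub>d_def using g(1) by measurable
    have preserve: "shift_along u g\<^sub>d X \<in> lmeasurable \<and>
        measure lebesgue (shift_along u g\<^sub>d X) = measure lebesgue X" if "X \<in> lmeasurable" for X
      using that sets_lebesgue_shift_along_countable[OF meas inv(1) cnt]
        emeasure_shift_along_countable[OF meas inv(1) cnt]
      by (auto simp: fmeasurable_def measure_def)
    have split: "shift_along u g L = shift_along u g\<^sub>d (shift_along u e L)"
      by (simp add: shift_along_shift_along[OF inv(2)] e_def)
    note between = shift_along_between_erode_dilate[where e = e and u = u and K = L, OF e_bound]
    have lower: "shift_along u g\<^sub>d (erode_along u d L) \<subseteq> shift_along u g L"
      unfolding split by (rule shift_along_mono[OF between(1)])
    have upper: "shift_along u g L \<subseteq> shift_along u g\<^sub>d (dilate_along u d L)"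
      unfolding split by (rule shift_along_mono[OF between(2)])
    have lm: "erode_along u d L \<in> lmeasurable" "dilate_along u d L \<in> lmeasurable"
      using d L by (auto intro!: lmeasurable_compact compact_erode_along compact_dilate_along)
    have "shift_along u g L \<in> lmeasurable"
      using preserve[OF lm(2)] upper sets by (blast intro: fmeasurableI2)
    with preserve[OF lm(1)] preserve[OF lm(2)] lower upper show ?thesis
      by (metis measure_mono_fmeasurable fmeasurableD)
  qed
  show "shift_along u g L \<in> lmeasurable"
    using bounds[of 1] by simp
  have "measure lebesgue L \<le> measure lebesgue (shift_along u g L)"
    by (rule LIMSEQ_le_const2[OF tendsto_measure_erode_along[OF L]]) (use bounds in simp)
  moreover have "measure lebesgue (shift_along u g L) \<le> measure lebesgue L"
    by (rule LIMSEQ_le_const[OF tendsto_measure_dilate_along[OF L(1)]]) (use bounds in simp)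
  ultimately show "measure lebesgue (shift_along u g L) = measure lebesgue L"
    by simp
qed

end

definition fibre :: "'a::real_inner set \<Rightarrow> 'a \<Rightarrow> 'a \<Rightarrow> real set" where
  "fibre K u z = {t. proj_perp u z + t *\<^sub>R u \<in> K}"

definition fibre_min :: "'a::real_inner set \<Rightarrow> 'a \<Rightarrow> 'a \<Rightarrow> real" where
  "fibre_min K u z = (if fibre K u z = {} then 0 else Inf (fibre K u z))"

definition fibre_max :: "'a::real_inner set \<Rightarrow> 'a \<Rightarrow> 'a \<Rightarrow> real" where
  "fibre_max K u z = (if fibre K u z = {} then 0 else Sup (fibre K u z))"

definition fibre_mid :: "'a::real_inner set \<Rightarrow> 'a \<Rightarrow> 'a \<Rightarrow> real" where
  "fibre_mid K u z = (fibre_min K u z + fibre_max K u z) / 2"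

text \<open>Every chord of \<open>K\<close> parallel to \<open>u\<close> is translated along \<open>u\<close> so that its midpoint \<open>m\<close>
  moves to \<open>\<phi> m\<close>.\<close>
definition chord_shift :: "'a::real_inner \<Rightarrow> (real \<Rightarrow> real) \<Rightarrow> 'a set \<Rightarrow> 'a set" where
  "chord_shift u \<phi> K = shift_along u (\<lambda>z. \<phi> (fibre_mid K u z) - fibre_mid K u z) K"

lemma proj_perp_diff: "proj_perp u (x - y) = proj_perp u x - proj_perp u y"
  by (simp add: proj_perp_def inner_diff_left algebra_simps)

context
  fixes u :: "'a::euclidean_space"
  assumes unit: "norm u = 1"
begin

lemma dist_power2_proj_perp:
  "dist x y ^ 2 = dist (proj_perp u x) (proj_perp u y) ^ 2 + (x \<bullet> u - y \<bullet> u) ^ 2"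
  using norm_power2_proj_perp[OF unit, of "x - y"]
  by (simp add: dist_norm proj_perp_diff inner_diff_left)

lemma proj_perp_idem [simp]: "proj_perp u (proj_perp u z) = proj_perp u z"
  by (simp add: proj_perp_fixed unit)

lemma proj_perp_diff_scaleR [simp]: "proj_perp u (z - s *\<^sub>R u) = proj_perp u z"
  using proj_perp_add_scaleR[OF unit, of z "- s"] by simp

lemma fibre_add_scaleR [simp]: "fibre K u (z + s *\<^sub>R u) = fibre K u z"
  by (simp add: fibre_def unit)

lemma fibre_diff_scaleR [simp]: "fibre K u (z - s *\<^sub>R u) = fibre K u z"
  by (simp add: fibre_def)

lemma invariant_along_fibre_mid: "invariant_along u (\<lambda>z. f (fibre_mid K u z))"
  by (simp add: invariant_along_def fibre_mid_def fibre_min_def fibre_max_def)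

lemma inner_mem_fibre_iff: "z \<bullet> u \<in> fibre K u z \<longleftrightarrow> z \<in> K"
  by (simp add: fibre_def proj_perp_add_inner)

lemma bex_fibre_iff: "(\<exists>t\<in>fibre K u z. P t) \<longleftrightarrow> (\<exists>p\<in>K. proj_perp u p = proj_perp u z \<and> P (p \<bullet> u))"
proof
  assume "\<exists>t\<in>fibre K u z. P t"
  then obtain t where "proj_perp u z + t *\<^sub>R u \<in> K" "P t"
    by (auto simp: fibre_def)
  then show "\<exists>p\<in>K. proj_perp u p = proj_perp u z \<and> P (p \<bullet> u)"
    using unit by (intro bexI[of _ "proj_perp u z + t *\<^sub>R u"]) (auto simp: inner_add_left)
next
  assume "\<exists>p\<in>K. proj_perp u p = proj_perp u z \<and> P (p \<bullet> u)"
  then show "\<exists>t\<in>fibre K u z. P t"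
    by (metis fibre_def mem_Collect_eq proj_perp_add_inner)
qed

lemma fibre_subset_image_inner: "fibre K u z \<subseteq> (\<lambda>p. p \<bullet> u) ` K"
proof
  fix t assume "t \<in> fibre K u z"
  then have "proj_perp u z + t *\<^sub>R u \<in> K"
    by (simp add: fibre_def)
  moreover have "(proj_perp u z + t *\<^sub>R u) \<bullet> u = t"
    using unit by (simp add: inner_add_left)
  ultimately show "t \<in> (\<lambda>p. p \<bullet> u) ` K"
    by (metis image_eqI)
qed

lemma fibre_nonempty_iff: "fibre K u z \<noteq> {} \<longleftrightarrow> proj_perp u z \<in> proj_perp u ` K"
proof -
  have "fibre K u z \<noteq> {} \<longleftrightarrow> (\<exists>t\<in>fibre K u z. True)"
    by blast
  also have "\<dots> \<longleftrightarrow> (\<exists>p\<in>K. proj_perp u z = proj_perp u p)"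
    unfolding bex_fibre_iff by (auto simp: eq_commute)
  finally show ?thesis
    by (simp add: image_iff)
qed

lemma compact_fibre:
  assumes "compact K"
  shows "compact (fibre K u z)"
proof -
  have "fibre K u z = (\<lambda>t. proj_perp u z + t *\<^sub>R u) -` K"
    by (auto simp: fibre_def)
  moreover have "closed ((\<lambda>t. proj_perp u z + t *\<^sub>R u) -` K)"
    using assms by (intro continuous_closed_vimage) (auto intro!: continuous_intros compact_imp_closed)
  ultimately have "closed (fibre K u z)"
    by simp
  then have "compact ((\<lambda>p. p \<bullet> u) ` K \<inter> fibre K u z)"
    using assms by (intro compact_Int_closed compact_continuous_image) (auto intro!: continuous_intros)
  then show ?thesis
    using fibre_subset_image_inner by (simp add: Int_absorb1)
qed

lemma convex_fibre:
  assumes "convex K"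
  shows "convex (fibre K u z)"
proof (rule convexI)
  fix s t and a b :: real
  assume st: "s \<in> fibre K u z" "t \<in> fibre K u z" and ab: "0 \<le> a" "0 \<le> b" "a + b = 1"
  have "a *\<^sub>R (proj_perp u z + s *\<^sub>R u) + b *\<^sub>R (proj_perp u z + t *\<^sub>R u) \<in> K"
    using st ab by (intro convexD[OF assms]) (auto simp: fibre_def)
  moreover have "a *\<^sub>R (proj_perp u z + s *\<^sub>R u) + b *\<^sub>R (proj_perp u z + t *\<^sub>R u)
      = (a + b) *\<^sub>R proj_perp u z + (a * s + b * t) *\<^sub>R u"
    by (simp add: algebra_simps)
  ultimately show "a *\<^sub>R s + b *\<^sub>R t \<in> fibre K u z"
    using ab(3) by (simp add: fibre_def)
qed

lemma fibre_eq_atLeastAtMost: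
  assumes "compact K" "convex K" "fibre K u z \<noteq> {}"
  shows "fibre K u z = {fibre_min K u z..fibre_max K u z}"
proof -
  obtain a b where ab: "fibre K u z = {a..b}"
    using connected_compact_interval_1[of "fibre K u z"] compact_fibre[OF assms(1)]
      convex_connected[OF convex_fibre[OF assms(2)]] by blast
  then have "a \<le> b" using assms(3) by auto
  then show ?thesis
    using ab assms(3) by (simp add: fibre_min_def fibre_max_def)
qed

lemma mem_chord_shift_iff:
  assumes "compact K" "convex K"
  shows "z \<in> chord_shift u \<phi> K \<longleftrightarrow> fibre K u z \<noteq> {} \<and>
    \<bar>z \<bullet> u - \<phi> (fibre_mid K u z)\<bar> \<le> (fibre_max K u z - fibre_min K u z) / 2"
proof -
  define g where "g = \<phi> (fibre_mid K u z) - fibre_mid K u z"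
  have "z \<in> chord_shift u \<phi> K \<longleftrightarrow> z - g *\<^sub>R u \<in> K"
    by (simp add: chord_shift_def shift_along_def g_def)
  also have "\<dots> \<longleftrightarrow> z \<bullet> u - g \<in> fibre K u z"
    using inner_mem_fibre_iff[of "z - g *\<^sub>R u" K] by (simp add: inner_diff_left unit)
  also have "\<dots> \<longleftrightarrow> fibre K u z \<noteq> {} \<and>
      \<bar>z \<bullet> u - \<phi> (fibre_mid K u z)\<bar> \<le> (fibre_max K u z - fibre_min K u z) / 2"
  proof (cases "fibre K u z = {}")
    case False
    then have "z \<bullet> u - g \<in> fibre K u z \<longleftrightarrow>
        fibre_min K u z \<le> z \<bullet> u - g \<and> z \<bullet> u - g \<le> fibre_max K u z"
      using fibre_eq_atLeastAtMost[OF assms False] by simp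
    also have "\<dots> \<longleftrightarrow>
        \<bar>z \<bullet> u - \<phi> (fibre_mid K u z)\<bar> \<le> (fibre_max K u z - fibre_min K u z) / 2"
      unfolding g_def fibre_mid_def abs_le_iff by argo
    finally show ?thesis
      using False by simp
  qed simp
  finally show ?thesis .
qed

end

lemma abs_le_sqrt_iff: "\<bar>x\<bar> \<le> sqrt y \<longleftrightarrow> x\<^sup>2 \<le> y"
  using sqrt_ge_absD real_le_rsqrt[of "\<bar>x\<bar>" y] by auto

lemma mem_cball_iff_power2: "0 \<le> r \<Longrightarrow> y \<in> cball x r \<longleftrightarrow> dist y x ^ 2 \<le> r ^ 2"
  by (simp add: dist_commute abs_le_square_iff[symmetric])

context
  fixes u :: "'a::euclidean_space"
  assumes unit: "norm u = 1"
begin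

lemma mem_fibre_cball:
  assumes "0 \<le> r"
  shows "t \<in> fibre (cball c r) u z \<longleftrightarrow>
    dist (proj_perp u z) (proj_perp u c) ^ 2 + (t - c \<bullet> u) ^ 2 \<le> r ^ 2"
proof -
  have "dist (proj_perp u z + t *\<^sub>R u) c ^ 2 = dist (proj_perp u z) (proj_perp u c) ^ 2 + (t - c \<bullet> u) ^ 2"
    using dist_power2_proj_perp[OF unit, of "proj_perp u z + t *\<^sub>R u" c] unit
    by (simp add: inner_add_left)
  then show ?thesis
    unfolding fibre_def mem_cball_iff_power2[OF assms] by simp
qed

lemma chord_shift_cball:
  assumes r: "0 \<le> r"
  shows "chord_shift u \<phi> (cball c r) = cball (proj_perp u c + \<phi> (c \<bullet> u) *\<^sub>R u) r"
proof (intro set_eqI)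
  fix z
  define \<rho> where "\<rho> = dist (proj_perp u z) (proj_perp u c)"
  define y where "y = proj_perp u c + \<phi> (c \<bullet> u) *\<^sub>R u"
  have "dist z y ^ 2 = \<rho> ^ 2 + (z \<bullet> u - \<phi> (c \<bullet> u)) ^ 2"
    using dist_power2_proj_perp[OF unit, of z y] unit
    by (simp add: y_def \<rho>_def inner_add_left proj_perp_idem)
  then have rhs: "z \<in> cball y r \<longleftrightarrow> \<rho> ^ 2 + (z \<bullet> u - \<phi> (c \<bullet> u)) ^ 2 \<le> r ^ 2"
    unfolding mem_cball_iff_power2[OF r] by simp
  show "z \<in> chord_shift u \<phi> (cball c r) \<longleftrightarrow> z \<in> cball y r"
  proof (cases "\<rho> \<le> r")
    case True
    define w where "w = sqrt (r ^ 2 - \<rho> ^ 2)"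
    have "\<rho> ^ 2 \<le> r ^ 2"
      using True by (simp add: \<rho>_def power_mono)
    then have w: "0 \<le> w" "w ^ 2 = r ^ 2 - \<rho> ^ 2"
      by (simp_all add: w_def)
    have mem: "t \<in> fibre (cball c r) u z \<longleftrightarrow> \<bar>t - c \<bullet> u\<bar> \<le> w" for t
      unfolding mem_fibre_cball[OF r] w_def abs_le_sqrt_iff \<rho>_def by linarith
    have fib: "fibre (cball c r) u z = {c \<bullet> u - w..c \<bullet> u + w}"
      by (intro set_eqI, unfold mem atLeastAtMost_iff abs_le_iff) argo
    then have "fibre_min (cball c r) u z = c \<bullet> u - w" "fibre_max (cball c r) u z = c \<bullet> u + w"
      using w(1) by (simp_all add: fibre_min_def fibre_max_def)
    then have "z \<in> chord_shift u \<phi> (cball c r) \<longleftrightarrow> \<bar>z \<bullet> u - \<phi> (c \<bullet> u)\<bar> \<le> w"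
      using mem_chord_shift_iff[OF unit, of "cball c r" z \<phi>] fib w(1) by (simp add: fibre_mid_def)
    also have "\<dots> \<longleftrightarrow> z \<in> cball y r"
      unfolding rhs w_def abs_le_sqrt_iff by linarith
    finally show ?thesis .
  next
    case False
    then have "r ^ 2 < \<rho> ^ 2"
      using r by (simp add: power_strict_mono)
    then have far: "\<not> \<rho> ^ 2 + s ^ 2 \<le> r ^ 2" for s
      using zero_le_power2[of s] by linarith
    then have "t \<notin> fibre (cball c r) u z" for t
      unfolding mem_fibre_cball[OF r] \<rho>_def[symmetric] by blast
    then have "fibre (cball c r) u z = {}" "z \<notin> cball y r"
      using rhs far by blast+
    then show ?thesis
      using mem_chord_shift_iff[OF unit, of "cball c r" z \<phi>] by simp
  qed
qed

lemma chord_shift_mono: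
  assumes \<phi>: "1-lipschitz_on UNIV \<phi>"
    and K: "compact K" "convex K" and L: "compact L" "convex L" and KL: "K \<subseteq> L"
  shows "chord_shift u \<phi> K \<subseteq> chord_shift u \<phi> L"
proof
  fix z assume z: "z \<in> chord_shift u \<phi> K"
  let ?a = "fibre_min K u z" and ?b = "fibre_max K u z"
  let ?a' = "fibre_min L u z" and ?b' = "fibre_max L u z"
  have neK: "fibre K u z \<noteq> {}" and zK: "\<bar>z \<bullet> u - \<phi> ((?a + ?b) / 2)\<bar> \<le> (?b - ?a) / 2"
    using z mem_chord_shift_iff[OF unit K] by (auto simp: fibre_mid_def)
  have sub: "fibre K u z \<subseteq> fibre L u z"
    using KL by (auto simp: fibre_def)
  then have neL: "fibre L u z \<noteq> {}"
    using neK by auto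
  have "{?a..?b} \<subseteq> {?a'..?b'}" "?a \<le> ?b"
    using sub neK fibre_eq_atLeastAtMost[OF unit K neK] fibre_eq_atLeastAtMost[OF unit L neL] by auto
  then have ab: "?a' \<le> ?a" "?b \<le> ?b'"
    by auto
  have "\<bar>\<phi> ((?a + ?b) / 2) - \<phi> ((?a' + ?b') / 2)\<bar> \<le> \<bar>(?a + ?b) / 2 - (?a' + ?b') / 2\<bar>"
    using lipschitz_onD[OF \<phi>, of "(?a + ?b) / 2" "(?a' + ?b') / 2"] by (simp add: dist_real_def)
  also have "\<dots> \<le> ((?a - ?a') + (?b' - ?b)) / 2"
    using ab unfolding abs_le_iff by argo
  finally have "\<bar>z \<bullet> u - \<phi> ((?a' + ?b') / 2)\<bar> \<le> (?b' - ?a') / 2"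
    using zK abs_triangle_ineq[of "z \<bullet> u - \<phi> ((?a + ?b) / 2)" "\<phi> ((?a + ?b) / 2) - \<phi> ((?a' + ?b') / 2)"]
    by simp
  then show "z \<in> chord_shift u \<phi> L"
    using neL mem_chord_shift_iff[OF unit L] by (simp add: fibre_mid_def)
qed

lemma le_fibre_max_iff:
  assumes "compact K" "fibre K u z \<noteq> {}"
  shows "c \<le> fibre_max K u z \<longleftrightarrow> (\<exists>t\<in>fibre K u z. c \<le> t)"
proof -
  have cpt: "compact (fibre K u z)"
    by (rule compact_fibre[OF unit assms(1)])
  have bdd: "bdd_above (fibre K u z)"
    by (rule bounded_imp_bdd_above[OF compact_imp_bounded[OF cpt]])
  have max: "fibre_max K u z = Sup (fibre K u z)"
    using assms(2) by (simp add: fibre_max_def)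
  show ?thesis
  proof
    assume "c \<le> fibre_max K u z"
    moreover have "Sup (fibre K u z) \<in> fibre K u z"
      by (rule closed_contains_Sup[OF assms(2) bdd compact_imp_closed[OF cpt]])
    ultimately show "\<exists>t\<in>fibre K u z. c \<le> t"
      unfolding max by blast
  next
    assume "\<exists>t\<in>fibre K u z. c \<le> t"
    then show "c \<le> fibre_max K u z"
      unfolding max using cSup_upper[OF _ bdd] order_trans by blast
  qed
qed

end

lemma fibre_uminus: "fibre K (- u) z = uminus ` fibre K u z"
proof -
  have "proj_perp (- u) z = proj_perp u z"
    by (simp add: proj_perp_def)
  then have "t \<in> fibre K (- u) z \<longleftrightarrow> - t \<in> fibre K u z" for t
    by (simp add: fibre_def)
  then show ?thesis
    by (force simp: image_iff)
qed

lemma fibre_min_eq_uminus_fibre_max: "fibre_min K u z = - fibre_max K (- u) z"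
  by (simp add: fibre_min_def fibre_max_def fibre_uminus Inf_real_def)

lemma borel_measurable_fibre_max:
  fixes u :: "'a::euclidean_space"
  assumes unit: "norm u = 1" and K: "compact K"
  shows "fibre_max K u \<in> borel_measurable borel"
proof (rule borel_measurableI_ge)
  fix c :: real
  define T where "T S = proj_perp u -` proj_perp u ` S" for S :: "'a set"
  have closed_T: "closed (T S)" if "compact S" for S
    unfolding T_def using that
    by (intro closed_vimage compact_imp_closed compact_continuous_image continuous_on_proj_perp)
  have "{z \<in> space borel. c \<le> fibre_max K u z} = T (K \<inter> {p. c \<le> p \<bullet> u}) \<union> (if c \<le> 0 then - T K else {})"
  proof (intro set_eqI)
    fix z
    show "z \<in> {z \<in> space borel. c \<le> fibre_max K u z} \<longleftrightarrow>
      z \<in> T (K \<inter> {p. c \<le> p \<bullet> u}) \<union> (if c \<le> 0 then - T K else {})"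
    proof (cases "fibre K u z = {}")
      case True
      then show ?thesis
        using fibre_nonempty_iff[OF unit, of K z] by (auto simp: fibre_max_def T_def)
    next
      case False
      have "c \<le> fibre_max K u z \<longleftrightarrow> (\<exists>p\<in>K \<inter> {p. c \<le> p \<bullet> u}. proj_perp u p = proj_perp u z)"
        unfolding le_fibre_max_iff[OF unit K False] bex_fibre_iff[OF unit] by blast
      also have "\<dots> \<longleftrightarrow> z \<in> T (K \<inter> {p. c \<le> p \<bullet> u})"
        unfolding T_def vimage_eq image_iff by (metis (no_types, lifting))
      finally have "c \<le> fibre_max K u z \<longleftrightarrow> z \<in> T (K \<inter> {p. c \<le> p \<bullet> u})" .
      moreover have "z \<in> T K"
        using False fibre_nonempty_iff[OF unit, of K z] by (simp add: T_def)
      ultimately show ?thesis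
        by simp
    qed
  qed
  also have "\<dots> \<in> sets borel"
  proof -
    have "T (K \<inter> {p. c \<le> p \<bullet> u}) \<in> sets borel"
      by (intro borel_closed closed_T compact_Int_closed K closed_Collect_le continuous_intros)
    moreover have "- T K \<in> sets borel"
      by (intro borel_comp borel_closed closed_T K)
    ultimately show ?thesis
      by simp
  qed
  finally show "{z \<in> space borel. c \<le> fibre_max K u z} \<in> sets borel" .
qed

lemma borel_measurable_fibre_mid:
  fixes u :: "'a::euclidean_space"
  assumes unit: "norm u = 1" and K: "compact K"
  shows "fibre_mid K u \<in> borel_measurable borel"
proof -
  have "norm (- u) = 1"
    using unit by simp
  then have "fibre_min K u \<in> borel_measurable borel"
    unfolding fibre_min_eq_uminus_fibre_max[abs_def]
    using borel_measurable_fibre_max[OF _ K] by measurable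
  then show ?thesis
    unfolding fibre_mid_def[abs_def] using borel_measurable_fibre_max[OF unit K] by measurable
qed

lemma shift_along_subset_invariant:
  assumes "\<And>z s. z \<in> C \<Longrightarrow> z + s *\<^sub>R u \<in> C" and "A \<subseteq> C"
  shows "shift_along u g A \<subseteq> C"
proof
  fix z assume "z \<in> shift_along u g A"
  then have "z - g z *\<^sub>R u \<in> C"
    using assms(2) by (auto simp: shift_along_def)
  then show "z \<in> C"
    using assms(1)[of "z - g z *\<^sub>R u" "g z"] by simp
qed

lemma
  fixes u :: "'a::euclidean_space"
  assumes unit: "norm u = 1" and \<phi>: "continuous_on UNIV \<phi>" and K: "compact K" "convex K"
  shows lmeasurable_chord_shift: "chord_shift u \<phi> K \<in> lmeasurable"
    and measure_chord_shift: "measure lebesgue (chord_shift u \<phi> K) = measure lebesgue K"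
proof -
  have [measurable]: "fibre_mid K u \<in> borel_measurable borel" "\<phi> \<in> borel_measurable borel"
    using borel_measurable_fibre_mid[OF unit K(1)] borel_measurable_continuous_onI[OF \<phi>] .
  have "(\<lambda>z. \<phi> (fibre_mid K u z) - fibre_mid K u z) \<in> borel_measurable borel"
    by measurable
  note shift = this invariant_along_fibre_mid[OF unit, of "\<lambda>m. \<phi> m - m"] K
  show "chord_shift u \<phi> K \<in> lmeasurable"
    unfolding chord_shift_def by (rule lmeasurable_shift_along[OF unit shift])
  show "measure lebesgue (chord_shift u \<phi> K) = measure lebesgue K"
    unfolding chord_shift_def by (rule measure_shift_along[OF unit shift])
qed

lemma hcyl_eq:
  fixes u :: "'a::euclidean_space"
  assumes unit: "norm u = 1"
  shows "hcyl u t0 x r = {p. p - (p \<bullet> u - t0) *\<^sub>R u \<in> cball x r}"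
proof (intro set_eqI iffI)
  fix p assume "p \<in> hcyl u t0 x r"
  then obtain z s where "p = z + s *\<^sub>R u" "z \<in> cball x r" "z \<bullet> u = t0"
    by (auto simp: hcyl_def hyperplane_def)
  then show "p \<in> {p. p - (p \<bullet> u - t0) *\<^sub>R u \<in> cball x r}"
    using unit by (simp add: inner_add_left)
next
  fix p assume p: "p \<in> {p. p - (p \<bullet> u - t0) *\<^sub>R u \<in> cball x r}"
  have "(p - (p \<bullet> u - t0) *\<^sub>R u) \<bullet> u = t0"
    using unit by (simp add: inner_diff_left)
  then show "p \<in> hcyl u t0 x r"
    using p unfolding hcyl_def hyperplane_def
    by (intro CollectI exI[of _ "p - (p \<bullet> u - t0) *\<^sub>R u"] exI[of _ "p \<bullet> u - t0"]) auto
qed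

lemma chord_shift_in_JH:
  fixes u :: "'a::euclidean_space"
  assumes unit: "norm u = 1" and \<phi>: "1-lipschitz_on UNIV \<phi>"
  shows "chord_shift u \<phi> \<in> JH u t0"
  unfolding JH_def
proof (intro CollectI conjI allI impI)
  have cont: "continuous_on UNIV \<phi>"
    by (rule lipschitz_on_continuous_on[OF \<phi>])
  fix K :: "'a set" assume K: "convex_body K"
  then have K': "compact K" "convex K"
    by (auto simp: convex_body_def)
  note lm = lmeasurable_chord_shift[OF unit cont K'] lmeasurable_compact[OF K'(1)]
  show "fin_meas (chord_shift u \<phi> K)"
    using lm by (auto simp: fin_meas_def fmeasurable_def)
  show "emeasure lebesgue (chord_shift u \<phi> K) = emeasure lebesgue K"
    using measure_chord_shift[OF unit cont K'] lm
    by (metis emeasure_eq_ennreal_measure fmeasurableD2)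
next
  fix K L :: "'a set" assume "convex_body K \<and> convex_body L \<and> K \<subseteq> L"
  then show "ae_subset (chord_shift u \<phi> K) (chord_shift u \<phi> L)"
    by (intro subset_imp_ae_subset chord_shift_mono[OF unit \<phi>]) (auto simp: convex_body_def)
next
  fix x :: 'a and r :: real assume "0 < r"
  then show "\<exists>y s. 0 < s \<and> ae_eq (chord_shift u \<phi> (cball x r)) (cball y s)"
    using chord_shift_cball[OF unit less_imp_le[OF \<open>0 < r\<close>], of \<phi> x] ae_eq_refl by auto
next
  fix A :: "'a set" and x r
  assume A: "convex_body A \<and> 0 < r \<and> ae_subset A (hcyl u t0 x r)"
  have eq: "hcyl u t0 x r = (\<lambda>p. p - (p \<bullet> u - t0) *\<^sub>R u) -` cball x r"
    by (simp add: hcyl_eq[OF unit] vimage_def)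
  have "closed (hcyl u t0 x r)"
    unfolding eq by (intro closed_vimage closed_cball continuous_intros)
  then have "A \<subseteq> hcyl u t0 x r"
    using A ae_subset_closed_imp_subset by blast
  moreover have "p + s *\<^sub>R u \<in> hcyl u t0 x r" if "p \<in> hcyl u t0 x r" for p s
    using that unit by (simp add: hcyl_eq inner_add_left algebra_simps)
  ultimately show "ae_subset (chord_shift u \<phi> A) (hcyl u t0 x r)"
    unfolding chord_shift_def by (intro subset_imp_ae_subset shift_along_subset_invariant)
qed

lemma assoc_contraction_chord_shift:
  fixes u :: "'a::euclidean_space"
  assumes unit: "norm u = 1"
  shows "assoc_contraction u (chord_shift u \<phi>) \<phi>"
  unfolding assoc_contraction_def
proof (intro allI impI)
  fix x :: 'a and t r :: real assume "x \<bullet> u = 0 \<and> 0 < r"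
  then show "ae_eq (chord_shift u \<phi> (cball (x + t *\<^sub>R u) r)) (cball (x + \<phi> t *\<^sub>R u) r)"
    using chord_shift_cball[OF unit, of r \<phi> "x + t *\<^sub>R u"] unit
    by (simp add: proj_perp_fixed inner_add_left ae_eq_refl)
qed

lemma null_sets_Diff_swap:
  assumes A: "A \<in> fmeasurable M" and B: "B \<in> sets M" and eq: "emeasure M A = emeasure M B"
    and null: "A - B \<in> null_sets M"
  shows "B - A \<in> null_sets M"
proof -
  have "emeasure M A + emeasure M (B - A) = emeasure M (A \<union> B)"
    using emeasure_Un[OF fmeasurableD[OF A] B] by simp
  also have "\<dots> = emeasure M B + emeasure M (A - B)"
    using emeasure_Un[OF B fmeasurableD[OF A]] by (simp add: Un_commute)
  also have "\<dots> = emeasure M A + 0"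
    by (simp add: eq null_setsD1[OF null])
  finally have "emeasure M (B - A) = 0"
    using fmeasurableD2[OF A] by (simp add: ennreal_add_left_cancel)
  then show ?thesis
    using A B by (auto dest: fmeasurableD)
qed

lemma null_sets_Diff_Un_of_emeasure_add:
  assumes A: "A \<in> fmeasurable M" and sets: "A1 \<in> sets M" "A2 \<in> sets M"
    and null: "A1 - A \<in> null_sets M" "A2 - A \<in> null_sets M" "A1 \<inter> A2 \<in> null_sets M"
    and add: "emeasure M A1 + emeasure M A2 = emeasure M A"
  shows "A - (A1 \<union> A2) \<in> null_sets M"
proof -
  have N: "(A1 \<union> A2) - A \<in> null_sets M"
    using null(1,2) by (metis null_sets.Un Un_Diff)
  have "A \<union> ((A1 \<union> A2) - A) \<in> fmeasurable M"
    by (intro fmeasurable.Un A fmeasurableI_null_sets N)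
  then have "A1 \<union> A2 \<in> fmeasurable M"
    by (rule fmeasurableI2) (use sets in auto)
  moreover have "emeasure M (A1 \<union> A2) = emeasure M A"
    using emeasure_Un'[OF sets null(3)] add by simp
  ultimately show ?thesis
    using null_sets_Diff_swap[of "A1 \<union> A2" M A] A N by (auto dest: fmeasurableD)
qed

lemma null_sets_if_locally_null:
  fixes A S :: "'a::euclidean_space set"
  assumes "\<And>z. z \<in> S \<Longrightarrow> \<exists>N. open N \<and> z \<in> N \<and> A \<inter> N \<in> null_sets lebesgue"
  shows "A \<inter> S \<in> null_sets lebesgue"
proof -
  define \<N> where "\<N> = {N. open N \<and> A \<inter> N \<in> null_sets lebesgue}"
  obtain \<F> where \<F>: "\<F> \<subseteq> \<N>" "countable \<F>" "\<Union>\<F> = \<Union>\<N>"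
    using Lindelof[of \<N>] by (auto simp: \<N>_def)
  have "S \<subseteq> \<Union>\<N>"
  proof
    fix z assume "z \<in> S"
    then obtain N where "open N" "z \<in> N" "A \<inter> N \<in> null_sets lebesgue"
      using assms by blast
    then show "z \<in> \<Union>\<N>"
      unfolding \<N>_def by blast
  qed
  then have "A \<inter> S \<subseteq> (\<Union>N\<in>\<F>. A \<inter> N)"
    using \<F>(3) by blast
  moreover have "(\<Union>N\<in>\<F>. A \<inter> N) \<in> null_sets lebesgue"
    using \<F>(1) by (intro null_sets_UN'[OF \<F>(2)]) (auto simp: \<N>_def)
  ultimately show ?thesis
    by (rule completion.complete2)
qed

lemma convex_body_Int_halfspace:
  assumes K: "convex_body K" and "K \<inter> {z. v \<bullet> z < c} \<noteq> {}"
  shows "convex_body (K \<inter> {z. v \<bullet> z \<le> c})"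
proof -
  have "{z. v \<bullet> z < c} \<inter> closure (interior K) \<noteq> {}"
    using assms by (simp add: closure_interior_convex_body Int_commute)
  then have "interior K \<inter> {z. v \<bullet> z < c} \<noteq> {}"
    using open_Int_closure_eq_empty[OF open_halfspace_lt] by blast
  moreover have "interior K \<inter> {z. v \<bullet> z < c} \<subseteq> interior (K \<inter> {z. v \<bullet> z \<le> c})"
    using open_halfspace_lt[of v c] interior_subset[of K]
    by (intro interior_maximal) (auto intro: open_Int)
  ultimately show ?thesis
    using K by (auto simp: convex_body_def intro!: compact_Int_closed closed_halfspace_le convex_Int
        convex_halfspace_le)
qed

definition box_constraints :: "'a::euclidean_space \<Rightarrow> 'a \<Rightarrow> real \<Rightarrow> ('a \<times> real) set" where
  "box_constraints u y d =
     (\<lambda>b. (proj_perp u b, proj_perp u b \<bullet> y + d)) ` Basis \<union>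
     (\<lambda>b. (- proj_perp u b, d - proj_perp u b \<bullet> y)) ` Basis"

lemma finite_box_constraints: "finite (box_constraints u y d)"
  by (simp add: box_constraints_def)

lemma box_constraints_orthogonal: "norm u = 1 \<Longrightarrow> \<forall>(v, c)\<in>box_constraints u y d. v \<bullet> u = 0"
  by (auto simp: box_constraints_def)

lemma mem_box_constraints_le:
  "(\<forall>(v, c)\<in>box_constraints u y d. v \<bullet> z \<le> c) \<longleftrightarrow>
    (\<forall>b\<in>Basis. \<bar>(proj_perp u z - proj_perp u y) \<bullet> b\<bar> \<le> d)"
proof -
  have eq: "(proj_perp u z - proj_perp u y) \<bullet> b = proj_perp u b \<bullet> z - proj_perp u b \<bullet> y" for b
    by (metis inner_commute inner_diff_left inner_proj_perp_commute)
  have "(\<forall>(v, c)\<in>box_constraints u y d. v \<bullet> z \<le> c) \<longleftrightarrow>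
      (\<forall>b\<in>Basis. proj_perp u b \<bullet> z \<le> proj_perp u b \<bullet> y + d \<and> - proj_perp u b \<bullet> z \<le> d - proj_perp u b \<bullet> y)"
    by (simp add: box_constraints_def ball_Un ball_conj_distrib)
  also have "\<dots> \<longleftrightarrow> (\<forall>b\<in>Basis. \<bar>(proj_perp u z - proj_perp u y) \<bullet> b\<bar> \<le> d)"
    unfolding eq abs_le_iff inner_minus_left by (intro ball_cong refl) argo
  finally show ?thesis .
qed

lemma mem_box_constraints_less:
  "(\<forall>(v, c)\<in>box_constraints u y d. v \<bullet> z < c) \<longleftrightarrow>
    (\<forall>b\<in>Basis. \<bar>(proj_perp u z - proj_perp u y) \<bullet> b\<bar> < d)"
proof -
  have eq: "(proj_perp u z - proj_perp u y) \<bullet> b = proj_perp u b \<bullet> z - proj_perp u b \<bullet> y" for b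
    by (metis inner_commute inner_diff_left inner_proj_perp_commute)
  have "(\<forall>(v, c)\<in>box_constraints u y d. v \<bullet> z < c) \<longleftrightarrow>
      (\<forall>b\<in>Basis. proj_perp u b \<bullet> z < proj_perp u b \<bullet> y + d \<and> - proj_perp u b \<bullet> z < d - proj_perp u b \<bullet> y)"
    by (simp add: box_constraints_def ball_Un ball_conj_distrib)
  also have "\<dots> \<longleftrightarrow> (\<forall>b\<in>Basis. \<bar>(proj_perp u z - proj_perp u y) \<bullet> b\<bar> < d)"
    unfolding eq abs_less_iff inner_minus_left by (intro ball_cong refl) argo
  finally show ?thesis .
qed


lemma JH_lmeasurable: "D \<in> JH u t0 \<Longrightarrow> convex_body K \<Longrightarrow> D K \<in> lmeasurable"
  unfolding JH_def fin_meas_def fmeasurable_def mem_Collect_eq by blast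

lemma JH_ae_mono:
  "D \<in> JH u t0 \<Longrightarrow> convex_body K \<Longrightarrow> convex_body L \<Longrightarrow> K \<subseteq> L \<Longrightarrow> ae_subset (D K) (D L)"
  by (simp add: JH_def)

lemma JH_emeasure: "D \<in> JH u t0 \<Longrightarrow> convex_body K \<Longrightarrow> emeasure lebesgue (D K) = emeasure lebesgue K"
  by (simp add: JH_def)

lemma bounded_subset_cball_below_halfspace:
  fixes w :: "'a::real_inner"
  assumes "bounded K" "K \<subseteq> {z. w \<bullet> z \<le> c}" "norm w = 1" "0 < \<epsilon>"
  obtains \<rho> where "0 < \<rho>" "K \<subseteq> cball ((c + \<epsilon> - \<rho>) *\<^sub>R w) \<rho>"
proof -
  obtain R where R: "0 < R" "\<And>p. p \<in> K \<Longrightarrow> norm p \<le> R"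
    using assms(1) bounded_pos by blast
  define \<Delta> where "\<Delta> = \<bar>c\<bar> + \<epsilon> + R"
  define \<rho> where "\<rho> = R\<^sup>2 / (2 * \<epsilon>) + \<Delta> / 2 + 1"
  have \<rho>: "0 < \<rho>"
    using assms(4) R(1) by (simp add: \<rho>_def \<Delta>_def add_pos_nonneg)
  have "dist ((c + \<epsilon> - \<rho>) *\<^sub>R w) p \<le> \<rho>" if p: "p \<in> K" for p
  proof -
    define \<alpha> where "\<alpha> = w \<bullet> p"
    define d where "d = c + \<epsilon> - \<alpha>"
    have "\<alpha> \<le> c"
      using assms(2) p by (auto simp: \<alpha>_def)
    moreover have "\<bar>\<alpha>\<bar> \<le> R"
      using Cauchy_Schwarz_ineq2[of w p] assms(3) R(2)[OF p] by (simp add: \<alpha>_def)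
    ultimately have d: "\<epsilon> \<le> d" "d \<le> \<Delta>"
      by (auto simp: d_def \<Delta>_def)
    have "dist ((c + \<epsilon> - \<rho>) *\<^sub>R w) p ^ 2
        = ((c + \<epsilon> - \<rho>) *\<^sub>R w - p) \<bullet> ((c + \<epsilon> - \<rho>) *\<^sub>R w - p)"
      unfolding dist_norm by (rule power2_norm_eq_inner)
    also have "\<dots> = (c + \<epsilon> - \<rho>)\<^sup>2 - 2 * (c + \<epsilon> - \<rho>) * \<alpha> + norm p ^ 2"
    proof -
      have "w \<bullet> w = 1" "p \<bullet> p = norm p ^ 2"
        using assms(3) by (simp_all add: dot_square_norm)
      then show ?thesis
        by (simp add: \<alpha>_def inner_diff_left inner_diff_right inner_commute power2_eq_square
            algebra_simps)
    qed
    also have "\<dots> = norm p ^ 2 - \<alpha>\<^sup>2 + (\<rho> - d)\<^sup>2"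
      by (simp add: d_def power2_eq_square algebra_simps)
    also have "\<dots> \<le> \<rho>\<^sup>2"
    proof -
      have "1 \<le> d / \<epsilon>"
        using d(1) assms(4) by simp
      then have "R\<^sup>2 * 1 \<le> R\<^sup>2 * (d / \<epsilon>)"
        by (rule mult_left_mono) simp
      then have "R\<^sup>2 \<le> R\<^sup>2 * (d / \<epsilon>)"
        by simp
      moreover have "d\<^sup>2 \<le> \<Delta> * d"
        using d assms(4) by (simp add: power2_eq_square mult_right_mono)
      moreover have "2 * \<rho> * d = R\<^sup>2 * (d / \<epsilon>) + \<Delta> * d + 2 * d"
        using assms(4) by (simp add: \<rho>_def field_simps)
      moreover have "norm p ^ 2 \<le> R\<^sup>2"
        using R(2)[OF p] by (simp add: power_mono)
      moreover have "(\<rho> - d)\<^sup>2 = \<rho>\<^sup>2 - 2 * \<rho> * d + d\<^sup>2"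
        by (simp add: power2_diff)
      moreover have "0 \<le> \<alpha>\<^sup>2" "0 \<le> d"
        using d(1) assms(4) by simp_all
      ultimately show ?thesis
        by linarith
    qed
    finally show ?thesis
      using \<rho> by (simp add: abs_le_square_iff[symmetric])
  qed
  then show ?thesis
    using that[OF \<rho>] by (auto simp: subset_iff)
qed

lemma (in -) fibre_upper_semicontinuous:
  fixes u :: "'a::euclidean_space"
  assumes unit: "norm u = 1" and K: "compact K" and \<eta>: "0 < \<eta>"
  obtains \<delta> where "0 < \<delta>"
    "\<And>p. p \<in> K \<Longrightarrow> dist (proj_perp u p) (proj_perp u z) \<le> \<delta> \<Longrightarrow>
      \<exists>t\<in>fibre K u z. \<bar>p \<bullet> u - t\<bar> < \<eta>"
proof -
  define S where "S = K \<inter> (\<Inter>t\<in>fibre K u z. {p. \<eta> \<le> \<bar>p \<bullet> u - t\<bar>})"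
  have "compact S"
    unfolding S_def using K
    by (intro compact_Int_closed closed_INT ballI closed_Collect_le continuous_intros) auto
  then have "closed (proj_perp u ` S)"
    by (intro compact_imp_closed compact_continuous_image continuous_on_proj_perp)
  moreover have "proj_perp u z \<notin> proj_perp u ` S"
  proof
    assume "proj_perp u z \<in> proj_perp u ` S"
    then obtain p where "p \<in> S" "proj_perp u p = proj_perp u z"
      by auto
    moreover from this have "p \<bullet> u \<in> fibre K u z"
      unfolding S_def using bex_fibre_iff[OF unit, of K z "\<lambda>t. t = p \<bullet> u"] by auto
    ultimately show False
      using \<eta> by (auto simp: S_def)
  qed
  ultimately obtain \<delta> where \<delta>: "0 < \<delta>" "\<And>q. q \<in> proj_perp u ` S \<Longrightarrow> \<delta> \<le> dist (proj_perp u z) q"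
    using separate_point_closed by metis
  show ?thesis
  proof (rule that[of "\<delta> / 2"])
    fix p assume "p \<in> K" "dist (proj_perp u p) (proj_perp u z) \<le> \<delta> / 2"
    then have "p \<notin> S"
      using \<delta> by (fastforce simp: dist_commute)
    with \<open>p \<in> K\<close> show "\<exists>t\<in>fibre K u z. \<bar>p \<bullet> u - t\<bar> < \<eta>"
      by (auto simp: S_def not_le)
  qed (use \<delta> in simp)
qed

lemma (in -) box_cut_subset_cball:
  fixes u :: "'a::euclidean_space"
  assumes unit: "norm u = 1" and K: "compact K" "convex K" and ne: "fibre K u z \<noteq> {}"
    and \<eta>: "0 < \<eta>"
  obtains \<delta> where "0 < \<delta>"
    "K \<inter> {p. \<forall>(v, d)\<in>box_constraints u z \<delta>. v \<bullet> p \<le> d} \<subseteq>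
      cball (proj_perp u z + fibre_mid K u z *\<^sub>R u) ((fibre_max K u z - fibre_min K u z) / 2 + 2 * \<eta>)"
proof -
  let ?m = "fibre_mid K u z" and ?h = "(fibre_max K u z - fibre_min K u z) / 2"
  obtain \<delta>0 where \<delta>0: "0 < \<delta>0"
    "\<And>p. p \<in> K \<Longrightarrow> dist (proj_perp u p) (proj_perp u z) \<le> \<delta>0 \<Longrightarrow>
      \<exists>t\<in>fibre K u z. \<bar>p \<bullet> u - t\<bar> < \<eta>"
    using fibre_upper_semicontinuous[OF unit K(1) \<eta>] by blast
  define \<delta> where "\<delta> = min \<eta> \<delta>0 / DIM('a)"
  have \<delta>: "0 < \<delta>" "DIM('a) * \<delta> \<le> \<eta>" "DIM('a) * \<delta> \<le> \<delta>0"
    using \<eta> \<delta>0 by (auto simp: \<delta>_def)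
  have "p \<in> cball (proj_perp u z + ?m *\<^sub>R u) (?h + 2 * \<eta>)"
    if p: "p \<in> K" "\<forall>(v, d)\<in>box_constraints u z \<delta>. v \<bullet> p \<le> d" for p
  proof -
    have "norm (proj_perp u p - proj_perp u z) \<le> (\<Sum>b\<in>Basis. \<bar>(proj_perp u p - proj_perp u z) \<bullet> b\<bar>)"
      by (rule norm_le_l1)
    also have "\<dots> \<le> (\<Sum>b\<in>(Basis::'a set). \<delta>)"
      using p(2) by (intro sum_mono) (simp add: mem_box_constraints_le)
    finally have near: "norm (proj_perp u p - proj_perp u z) \<le> DIM('a) * \<delta>"
      by simp
    then obtain t where t: "t \<in> fibre K u z" "\<bar>p \<bullet> u - t\<bar> < \<eta>"
      using \<delta>0(2)[OF p(1)] \<delta>(3) by (auto simp: dist_norm)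
    have "fibre_min K u z \<le> t" "t \<le> fibre_max K u z"
      using t(1) fibre_eq_atLeastAtMost[OF unit K ne] by auto
    then have "\<bar>t - ?m\<bar> \<le> ?h"
      unfolding fibre_mid_def abs_le_iff by argo
    moreover have "\<bar>p \<bullet> u - ?m\<bar> \<le> \<bar>p \<bullet> u - t\<bar> + \<bar>t - ?m\<bar>"
      using abs_triangle_ineq[of "p \<bullet> u - t" "t - ?m"] by simp
    ultimately have "\<bar>p \<bullet> u - ?m\<bar> < ?h + \<eta>"
      using t(2) by argo
    have "p - (proj_perp u z + ?m *\<^sub>R u) = (proj_perp u p - proj_perp u z) + (p \<bullet> u - ?m) *\<^sub>R u"
      by (simp add: proj_perp_def algebra_simps)
    then have "dist p (proj_perp u z + ?m *\<^sub>R u) \<le> norm (proj_perp u p - proj_perp u z) + \<bar>p \<bullet> u - ?m\<bar>"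
      using norm_triangle_ineq[of "proj_perp u p - proj_perp u z" "(p \<bullet> u - ?m) *\<^sub>R u"] unit
      by (simp only: dist_norm norm_scaleR real_norm_def mult.right_neutral)
    then show ?thesis
      using near \<delta>(2) \<open>\<bar>p \<bullet> u - ?m\<bar> < ?h + \<eta>\<close> by (simp add: dist_commute)
  qed
  then show ?thesis
    using that[OF \<delta>(1)] by blast
qed

context
  fixes u :: "'a::euclidean_space" and t0 :: real and D :: "'a set \<Rightarrow> 'a set" and \<phi> :: "real \<Rightarrow> real"
  assumes unit: "norm u = 1" and D: "D \<in> JH u t0" and \<phi>: "assoc_contraction u D \<phi>"
begin

lemma JH_cball: "0 < r \<Longrightarrow> ae_eq (D (cball c r)) (cball (proj_perp u c + \<phi> (c \<bullet> u) *\<^sub>R u) r)"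
  using \<phi>[unfolded assoc_contraction_def, rule_format, of "proj_perp u c" r "c \<bullet> u"] unit
  by (simp add: proj_perp_add_inner)

lemma lipschitz_contraction: "1-lipschitz_on UNIV \<phi>"
proof (rule lipschitz_onI)
  fix s t :: real
  have "cball (t *\<^sub>R u) 1 \<subseteq> cball (s *\<^sub>R u) (1 + dist t s)"
    using unit by (simp add: cball_subset_cball_iff dist_norm dist_real_def flip: scaleR_diff_left)
  then have "ae_subset (D (cball (t *\<^sub>R u) 1)) (D (cball (s *\<^sub>R u) (1 + dist t s)))"
    by (intro JH_ae_mono[OF D] convex_body_cball) (auto intro: add_pos_nonneg)
  moreover have "ae_eq (D (cball (t *\<^sub>R u) 1)) (cball (\<phi> t *\<^sub>R u) 1)"
    using JH_cball[of 1 "t *\<^sub>R u"] unit by (simp add: proj_perp_def)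
  moreover have "ae_eq (D (cball (s *\<^sub>R u) (1 + dist t s))) (cball (\<phi> s *\<^sub>R u) (1 + dist t s))"
    using JH_cball[OF add_pos_nonneg[OF zero_less_one zero_le_dist[of t s]], of "s *\<^sub>R u"] unit
    by (simp add: proj_perp_def)
  ultimately have "ae_subset (cball (\<phi> t *\<^sub>R u) 1) (cball (\<phi> s *\<^sub>R u) (1 + dist t s))"
    unfolding ae_eq_def by (blast intro: ae_subset_trans)
  then have "cball (\<phi> t *\<^sub>R u) 1 \<subseteq> cball (\<phi> s *\<^sub>R u) (1 + dist t s)"
    using ae_subset_closed_imp_subset[OF convex_body_cball[OF zero_less_one] closed_cball] by blast
  then show "dist (\<phi> t) (\<phi> s) \<le> 1 * dist t s"
    using unit by (simp add: cball_subset_cball_iff dist_norm dist_real_def flip: scaleR_diff_left)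
qed simp

lemma ae_subset_halfspace:
  assumes K: "convex_body K" and v: "v \<bullet> u = 0" and Kv: "K \<subseteq> {z. v \<bullet> z \<le> c}"
  shows "ae_subset (D K) {z. v \<bullet> z \<le> c}"
proof (cases "v = 0")
  case True
  obtain p where "p \<in> K"
    using K interior_subset unfolding convex_body_def by blast
  then have "v \<bullet> p \<le> c"
    using Kv by blast
  then have "{z. v \<bullet> z \<le> c} = UNIV"
    using True by simp
  then show ?thesis
    by (simp add: subset_imp_ae_subset)
next
  case False
  define w where "w = v /\<^sub>R norm v"
  define c' where "c' = c / norm v"
  have w: "norm w = 1" "w \<bullet> u = 0"
    using False v by (simp_all add: w_def)
  have halfspace: "{z. v \<bullet> z \<le> c} = {z. w \<bullet> z \<le> c'}"
    using False by (auto simp: w_def c'_def field_simps)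
  have near: "D K - {z. w \<bullet> z \<le> c' + \<epsilon>} \<in> null_sets lebesgue" if "0 < \<epsilon>" for \<epsilon>
  proof -
    obtain \<rho> where \<rho>: "0 < \<rho>" "K \<subseteq> cball ((c' + \<epsilon> - \<rho>) *\<^sub>R w) \<rho>"
      using bounded_subset_cball_below_halfspace[of K w c' \<epsilon>] K Kv halfspace w(1) \<open>0 < \<epsilon>\<close>
      by (auto simp: convex_body_def compact_imp_bounded)
    define x where "x = (c' + \<epsilon> - \<rho>) *\<^sub>R w"
    have x: "x \<bullet> u = 0"
      using w(2) by (simp add: x_def)
    then have x': "proj_perp u x = x"
      by (rule proj_perp_fixed[OF unit])
    have "ae_subset (D K) (D (cball x \<rho>))"
      using \<rho> by (intro JH_ae_mono[OF D K convex_body_cball]) (simp_all add: x_def)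
    moreover have "ae_subset (D (cball x \<rho>)) (cball (x + \<phi> 0 *\<^sub>R u) \<rho>)"
      using JH_cball[OF \<rho>(1), of x] x x' by (simp add: ae_eq_def)
    moreover have "cball (x + \<phi> 0 *\<^sub>R u) \<rho> \<subseteq> {z. w \<bullet> z \<le> c' + \<epsilon>}"
    proof
      fix z assume "z \<in> cball (x + \<phi> 0 *\<^sub>R u) \<rho>"
      then have "w \<bullet> (z - (x + \<phi> 0 *\<^sub>R u)) \<le> \<rho>"
        using Cauchy_Schwarz_ineq2[of w "z - (x + \<phi> 0 *\<^sub>R u)"] w(1)
        by (simp add: dist_norm norm_minus_commute)
      moreover have "w \<bullet> (x + \<phi> 0 *\<^sub>R u) = c' + \<epsilon> - \<rho>"
        using w by (simp add: x_def inner_add_right dot_square_norm)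
      ultimately show "z \<in> {z. w \<bullet> z \<le> c' + \<epsilon>}"
        by (simp add: inner_diff_right)
    qed
    ultimately show ?thesis
      unfolding ae_subset_def[symmetric]
      by (blast intro: ae_subset_trans subset_imp_ae_subset)
  qed
  have "D K - {z. w \<bullet> z \<le> c'} \<subseteq> (\<Union>j. D K - {z. w \<bullet> z \<le> c' + 1 / real (Suc j)})"
  proof
    fix z assume z: "z \<in> D K - {z. w \<bullet> z \<le> c'}"
    then obtain j where "1 / real (Suc j) < w \<bullet> z - c'"
      using nat_approx_posE[of "w \<bullet> z - c'"] by auto
    then have "z \<in> D K - {z. w \<bullet> z \<le> c' + 1 / real (Suc j)}"
      using z by auto
    then show "z \<in> (\<Union>j. D K - {z. w \<bullet> z \<le> c' + 1 / real (Suc j)})"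
      by blast
  qed
  moreover have "(\<Union>j. D K - {z. w \<bullet> z \<le> c' + 1 / real (Suc j)}) \<in> null_sets lebesgue"
    using near by (intro null_sets_UN) simp
  ultimately show ?thesis
    unfolding ae_subset_def halfspace by (rule completion.complete2)
qed

text \<open>Both halves of \<open>K\<close> are mapped into the corresponding halfspaces, and their images fill
  \<open>D K\<close> up to a null set because the measures add up.\<close>
lemma ae_subset_cut_halfspace:
  assumes K: "convex_body K" and v: "v \<bullet> u = 0" and K1: "convex_body (K \<inter> {z. v \<bullet> z \<le> c})"
  shows "ae_subset (D K \<inter> {z. v \<bullet> z < c}) (D (K \<inter> {z. v \<bullet> z \<le> c}))"
proof (cases "K \<subseteq> {z. v \<bullet> z \<le> c}")
  case True
  then have "K \<inter> {z. v \<bullet> z \<le> c} = K"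
    by blast
  then show ?thesis
    by (simp add: subset_imp_ae_subset)
next
  case False
  let ?H1 = "{z. v \<bullet> z \<le> c}" and ?H2 = "{z. (- v) \<bullet> z \<le> - c}"
  have "K \<inter> {z. (- v) \<bullet> z < - c} \<noteq> {}"
    using False by auto
  then have K2: "convex_body (K \<inter> ?H2)"
    by (rule convex_body_Int_halfspace[OF K])
  have "v \<noteq> 0"
    using False K1 by (cases "0 \<le> c") (auto simp: convex_body_def)
  then have hyperplane: "{z. v \<bullet> z = c} \<in> null_sets lebesgue"
    using negligible_hyperplane[of v c] negligible_iff_null_sets by blast
  have H12: "?H1 \<inter> ?H2 = {z. v \<bullet> z = c}"
    by auto
  note lm = JH_lmeasurable[OF D K] JH_lmeasurable[OF D K1] JH_lmeasurable[OF D K2]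
  have sub: "D (K \<inter> ?H1) - D K \<in> null_sets lebesgue" "D (K \<inter> ?H2) - D K \<in> null_sets lebesgue"
    using JH_ae_mono[OF D K1 K] JH_ae_mono[OF D K2 K] by (auto simp: ae_subset_def)
  have half: "D (K \<inter> ?H1) - ?H1 \<in> null_sets lebesgue" "D (K \<inter> ?H2) - ?H2 \<in> null_sets lebesgue"
    using ae_subset_halfspace[OF K1 v] ae_subset_halfspace[OF K2, of "- v" "- c"] v
    by (auto simp: ae_subset_def)
  have "D (K \<inter> ?H1) \<inter> D (K \<inter> ?H2) \<subseteq> (D (K \<inter> ?H1) - ?H1) \<union> (D (K \<inter> ?H2) - ?H2) \<union> {z. v \<bullet> z = c}"
    using H12 by blast
  then have disj: "D (K \<inter> ?H1) \<inter> D (K \<inter> ?H2) \<in> null_sets lebesgue"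
    using half hyperplane by (blast intro: completion.complete2)
  have "emeasure lebesgue (K \<inter> ?H1) + emeasure lebesgue (K \<inter> ?H2) = emeasure lebesgue K"
  proof -
    have "(K \<inter> ?H1) \<inter> (K \<inter> ?H2) \<in> null_sets lebesgue"
      using H12 hyperplane by (blast intro: completion.complete2)
    moreover have "(K \<inter> ?H1) \<union> (K \<inter> ?H2) = K"
      by auto
    ultimately show ?thesis
      using emeasure_Un'[of "K \<inter> ?H1" lebesgue "K \<inter> ?H2"] K1 K2
      by (simp add: convex_body_lmeasurable fmeasurableD)
  qed
  then have "emeasure lebesgue (D (K \<inter> ?H1)) + emeasure lebesgue (D (K \<inter> ?H2)) = emeasure lebesgue (D K)"
    using K K1 K2 by (simp add: JH_emeasure[OF D])
  then have "D K - (D (K \<inter> ?H1) \<union> D (K \<inter> ?H2)) \<in> null_sets lebesgue"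
    by (rule null_sets_Diff_Un_of_emeasure_add[OF lm(1) fmeasurableD[OF lm(2)] fmeasurableD[OF lm(3)]
          sub disj])
  moreover have "D K \<inter> {z. v \<bullet> z < c} - D (K \<inter> ?H1) \<subseteq>
      (D K - (D (K \<inter> ?H1) \<union> D (K \<inter> ?H2))) \<union> (D (K \<inter> ?H2) - ?H2)"
    by auto
  ultimately show ?thesis
    unfolding ae_subset_def using half(2) by (blast intro: completion.complete2)
qed

lemma ae_subset_cut_polyhedron:
  assumes "finite V" "\<forall>(v, c)\<in>V. v \<bullet> u = 0" and L: "convex_body L"
  shows "convex_body K \<Longrightarrow> K \<inter> {z. \<forall>(v, c)\<in>V. v \<bullet> z \<le> c} \<subseteq> L \<Longrightarrow>
    ae_subset (D K \<inter> {z. \<forall>(v, c)\<in>V. v \<bullet> z < c}) (D L)"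
  using assms(1,2)
proof (induction V arbitrary: K rule: finite_induct)
  case empty
  then show ?case
    using JH_ae_mono[OF D _ L] by simp
next
  case (insert vc V)
  obtain v c where vc: "vc = (v, c)"
    by fastforce
  have v: "v \<bullet> u = 0" and V: "\<forall>(v, c)\<in>V. v \<bullet> u = 0"
    using insert.prems(3) vc by auto
  have lt: "{z. \<forall>(v, c)\<in>insert vc V. v \<bullet> z < c} = {z. v \<bullet> z < c} \<inter> {z. \<forall>(v, c)\<in>V. v \<bullet> z < c}"
    by (auto simp: vc)
  show ?case
  proof (cases "K \<inter> {z. v \<bullet> z < c} = {}")
    case True
    then have "ae_subset (D K) {z. (- v) \<bullet> z \<le> - c}"
      using v by (intro ae_subset_halfspace[OF insert.prems(1)]) auto
    then show ?thesis
      unfolding lt ae_subset_def by (rule completion.complete2[rotated]) auto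
  next
    case False
    let ?K = "K \<inter> {z. v \<bullet> z \<le> c}"
    have K: "convex_body ?K"
      by (rule convex_body_Int_halfspace[OF insert.prems(1) False])
    have "ae_subset (D ?K \<inter> {z. \<forall>(v, c)\<in>V. v \<bullet> z < c}) (D L)"
      using insert.prems(2) vc by (intro insert.IH[OF K _ V]) auto
    moreover have "ae_subset (D K \<inter> {z. v \<bullet> z < c} \<inter> {z. \<forall>(v, c)\<in>V. v \<bullet> z < c})
        (D ?K \<inter> {z. \<forall>(v, c)\<in>V. v \<bullet> z < c})"
      by (rule ae_subset_Int[OF ae_subset_cut_halfspace[OF insert.prems(1) v K]])
    ultimately show ?thesis
      unfolding lt by (simp add: Int_assoc) (blast intro: ae_subset_trans)
  qed
qed

lemma locally_null_off_shadow:
  assumes K: "convex_body K" and empty: "fibre K u z = {}"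
  shows "\<exists>N. open N \<and> z \<in> N \<and> D K \<inter> N \<in> null_sets lebesgue"
proof -
  have Kc: "compact K" "convex K"
    using K by (auto simp: convex_body_def)
  have "convex (proj_perp u ` K)" "closed (proj_perp u ` K)"
    using convex_linear_image[OF linear_proj_perp Kc(2)]
      compact_imp_closed[OF compact_continuous_image[OF continuous_on_proj_perp Kc(1)]] .
  moreover have "proj_perp u z \<notin> proj_perp u ` K"
    using empty fibre_nonempty_iff[OF unit] by blast
  ultimately obtain a b where ab: "a \<bullet> proj_perp u z < b" "\<And>x. x \<in> proj_perp u ` K \<Longrightarrow> b < a \<bullet> x"
    using separating_hyperplane_closed_point by metis
  define v where "v = - proj_perp u a"
  have v: "v \<bullet> u = 0"
    using unit by (simp add: v_def)
  have inner_v: "v \<bullet> p = - (a \<bullet> proj_perp u p)" for p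
    by (simp add: v_def inner_proj_perp_commute)
  have "K \<subseteq> {p. v \<bullet> p \<le> - b}"
    using ab(2) by (force simp: inner_v)
  then have "D K - {p. v \<bullet> p \<le> - b} \<in> null_sets lebesgue"
    using ae_subset_halfspace[OF K v] by (simp add: ae_subset_def)
  moreover have "D K \<inter> {p. - b < v \<bullet> p} \<subseteq> D K - {p. v \<bullet> p \<le> - b}"
    by auto
  ultimately have "D K \<inter> {p. - b < v \<bullet> p} \<in> null_sets lebesgue"
    by (blast intro: completion.complete2)
  moreover have "open {p. - b < v \<bullet> p}" "z \<in> {p. - b < v \<bullet> p}"
    using open_halfspace_gt[where a = v and b = "- b"] ab(1) by (simp_all add: inner_v)
  ultimately show ?thesis
    by blast
qed

lemma locally_null_off_shifted_chord:
  assumes K: "convex_body K" and ne: "fibre K u z \<noteq> {}"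
    and off: "(fibre_max K u z - fibre_min K u z) / 2 < \<bar>z \<bullet> u - \<phi> (fibre_mid K u z)\<bar>"
  shows "\<exists>N. open N \<and> z \<in> N \<and> D K \<inter> N \<in> null_sets lebesgue"
proof -
  have Kc: "compact K" "convex K"
    using K by (auto simp: convex_body_def)
  define m h where "m = fibre_mid K u z" and "h = (fibre_max K u z - fibre_min K u z) / 2"
  define \<eta> where "\<eta> = (\<bar>z \<bullet> u - \<phi> m\<bar> - h) / 3"
  define \<rho> where "\<rho> = h + 2 * \<eta>"
  have \<eta>: "0 < \<eta>"
    using off by (simp add: \<eta>_def m_def h_def)
  have "fibre_min K u z \<le> fibre_max K u z"
    using fibre_eq_atLeastAtMost[OF unit Kc ne] ne by auto
  then have \<rho>: "0 < \<rho>"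
    using \<eta> unfolding \<rho>_def h_def by argo
  obtain \<delta> where \<delta>: "0 < \<delta>"
    "K \<inter> {p. \<forall>(v, d)\<in>box_constraints u z \<delta>. v \<bullet> p \<le> d} \<subseteq> cball (proj_perp u z + m *\<^sub>R u) \<rho>"
    using box_cut_subset_cball[OF unit Kc ne \<eta>] unfolding m_def h_def \<rho>_def by blast
  let ?box = "{p. \<forall>(v, d)\<in>box_constraints u z \<delta>. v \<bullet> p < d}"
  let ?B = "cball (proj_perp u z + \<phi> m *\<^sub>R u) \<rho>"
  have "ae_subset (D K \<inter> ?box) (D (cball (proj_perp u z + m *\<^sub>R u) \<rho>))"
    by (rule ae_subset_cut_polyhedron[OF finite_box_constraints box_constraints_orthogonal[OF unit]
          convex_body_cball[OF \<rho>] K \<delta>(2)])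
  moreover have "ae_subset (D (cball (proj_perp u z + m *\<^sub>R u) \<rho>)) ?B"
    using JH_cball[OF \<rho>, of "proj_perp u z + m *\<^sub>R u"] unit by (simp add: ae_eq_def inner_add_left)
  ultimately have "D K \<inter> (?box - ?B) \<in> null_sets lebesgue"
    unfolding ae_subset_def by (rule completion.complete2[rotated, OF null_sets.Un]) auto
  moreover have "open (?box - ?B)"
  proof -
    have "?box = (\<Inter>(v, d)\<in>box_constraints u z \<delta>. {p. v \<bullet> p < d})"
      by auto
    then show ?thesis
      by (auto intro!: open_Diff open_INT finite_box_constraints open_halfspace_lt)
  qed
  moreover have "z \<in> ?box - ?B"
  proof -
    have "z - (proj_perp u z + \<phi> m *\<^sub>R u) = (z \<bullet> u - \<phi> m) *\<^sub>R u"
      by (simp add: proj_perp_def algebra_simps)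
    then have "dist (proj_perp u z + \<phi> m *\<^sub>R u) z = \<bar>z \<bullet> u - \<phi> m\<bar>"
      using unit by (simp add: dist_norm norm_minus_commute)
    moreover have "\<rho> < \<bar>z \<bullet> u - \<phi> m\<bar>"
      using \<eta> unfolding \<rho>_def \<eta>_def by argo
    ultimately show ?thesis
      using \<delta>(1) by (simp add: mem_box_constraints_less)
  qed
  ultimately show ?thesis
    by blast
qed

lemma ae_subset_chord_shift:
  assumes K: "convex_body K"
  shows "ae_subset (D K) (chord_shift u \<phi> K)"
proof -
  have Kc: "compact K" "convex K"
    using K by (auto simp: convex_body_def)
  have "\<exists>N. open N \<and> z \<in> N \<and> D K \<inter> N \<in> null_sets lebesgue" if "z \<in> - chord_shift u \<phi> K" for z
  proof (cases "fibre K u z = {}")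
    case True
    then show ?thesis
      by (rule locally_null_off_shadow[OF K])
  next
    case False
    then have "(fibre_max K u z - fibre_min K u z) / 2 < \<bar>z \<bullet> u - \<phi> (fibre_mid K u z)\<bar>"
      using that mem_chord_shift_iff[OF unit Kc] by auto
    then show ?thesis
      by (rule locally_null_off_shifted_chord[OF K False])
  qed
  then have "D K \<inter> - chord_shift u \<phi> K \<in> null_sets lebesgue"
    by (rule null_sets_if_locally_null)
  then show ?thesis
    by (simp add: ae_subset_def Diff_eq)
qed

lemma ae_eq_chord_shift:
  assumes K: "convex_body K"
  shows "ae_eq (D K) (chord_shift u \<phi> K)"
proof -
  have Kc: "compact K" "convex K"
    using K by (auto simp: convex_body_def)
  note cont = lipschitz_on_continuous_on[OF lipschitz_contraction]
  have lm: "chord_shift u \<phi> K \<in> lmeasurable"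
    by (rule lmeasurable_chord_shift[OF unit cont Kc])
  have "emeasure lebesgue (D K) = emeasure lebesgue (chord_shift u \<phi> K)"
    using JH_emeasure[OF D K] measure_chord_shift[OF unit cont Kc] lm convex_body_lmeasurable[OF K]
    by (metis emeasure_eq_ennreal_measure fmeasurableD2)
  moreover have "D K - chord_shift u \<phi> K \<in> null_sets lebesgue"
    using ae_subset_chord_shift[OF K] by (simp add: ae_subset_def)
  ultimately have "chord_shift u \<phi> K - D K \<in> null_sets lebesgue"
    by (rule null_sets_Diff_swap[OF JH_lmeasurable[OF D K] fmeasurableD[OF lm]])
  then show ?thesis
    using ae_subset_chord_shift[OF K] by (simp add: ae_eq_def ae_subset_def)
qed

end

lemma lipschitz_on_pointwise_limit:
  assumes lip: "\<And>k. C-lipschitz_on S (f k)" and lim: "\<And>x. x \<in> S \<Longrightarrow> (\<lambda>k. f k x) \<longlonglongrightarrow> g x"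
  shows "C-lipschitz_on S g"
proof (rule lipschitz_onI)
  fix x y assume xy: "x \<in> S" "y \<in> S"
  have "(\<lambda>k. dist (f k x) (f k y)) \<longlonglongrightarrow> dist (g x) (g y)"
    using xy by (intro tendsto_dist lim)
  then show "dist (g x) (g y) \<le> C * dist x y"
    by (rule LIMSEQ_le_const2) (use lipschitz_onD[OF lip xy] in blast)
next
  show "0 \<le> C"
    using lipschitz_on_nonneg[OF lip[of 0]] .
qed

lemma uniform_limit_of_lipschitz:
  fixes f :: "nat \<Rightarrow> 'a::metric_space \<Rightarrow> 'b::metric_space"
  assumes S: "compact S" and lip: "\<And>k. C-lipschitz_on S (f k)" "C-lipschitz_on S g"
    and lim: "\<And>x. x \<in> S \<Longrightarrow> (\<lambda>k. f k x) \<longlonglongrightarrow> g x"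
  shows "uniform_limit S f g sequentially"
  unfolding uniform_limit_iff
proof (intro allI impI)
  fix e :: real assume e: "0 < e"
  have C: "0 \<le> C"
    by (rule lipschitz_on_nonneg[OF lip(2)])
  define h where "h = e / (2 * C + 2)"
  have h: "0 < h" "(2 * C + 1) * h < e"
    using e C by (simp_all add: h_def field_simps)
  obtain T where T: "T \<subseteq> S" "finite T" "S \<subseteq> (\<Union>x\<in>T. ball x h)"
    using compactE_image[OF S, of S "\<lambda>x. ball x h"] h(1) by force
  have "\<forall>\<^sub>F k in sequentially. \<forall>t\<in>T. dist (f k t) (g t) < h"
    using T(1) lim h(1) by (intro eventually_ball_finite T(2)) (auto simp: tendsto_iff)
  then show "\<forall>\<^sub>F k in sequentially. \<forall>x\<in>S. dist (f k x) (g x) < e"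
  proof (rule eventually_mono, intro ballI)
    fix k x assume near: "\<forall>t\<in>T. dist (f k t) (g t) < h" and x: "x \<in> S"
    obtain t where t: "t \<in> T" "dist t x < h"
      using T(3) x by auto
    have tS: "t \<in> S"
      using T(1) t(1) by blast
    have Ch: "C * dist t x \<le> C * h" "C * dist x t \<le> C * h"
      using t(2) C by (auto intro: mult_left_mono simp: dist_commute)
    have "dist (f k x) (f k t) \<le> C * h"
      using lipschitz_onD[OF lip(1)[of k] x tS] Ch(2) by linarith
    moreover have "dist (g t) (g x) \<le> C * h"
      using lipschitz_onD[OF lip(2) tS x] Ch(1) by linarith
    moreover have "dist (f k t) (g t) < h"
      using near t(1) by blast
    moreover have "dist (f k x) (g x) \<le> dist (f k x) (f k t) + dist (f k t) (g t) + dist (g t) (g x)"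
      using dist_triangle[of "f k x" "g x" "f k t"] dist_triangle[of "f k t" "g x" "g t"] by simp
    ultimately show "dist (f k x) (g x) < e"
      using h(2) by (simp add: algebra_simps)
  qed
qed

lemma ball_subset_cball_diff:
  fixes a b :: "'a::real_normed_vector"
  assumes "0 < \<delta>" "\<delta> \<le> r" "2 * \<delta> \<le> dist a b"
  shows "ball (a + ((r - \<delta>) / dist a b) *\<^sub>R (a - b)) \<delta> \<subseteq> cball a r - cball b r"
proof
  define p where "p = a + ((r - \<delta>) / dist a b) *\<^sub>R (a - b)"
  have d: "0 < dist a b"
    using assms by linarith
  have "norm (p - a) = r - \<delta>"
    using d assms(2) by (simp add: p_def dist_norm)
  moreover have "norm (p - b) = dist a b + r - \<delta>"
  proof -
    have "p - b = (1 + (r - \<delta>) / dist a b) *\<^sub>R (a - b)"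
      by (simp add: p_def algebra_simps)
    then have "norm (p - b) = \<bar>1 + (r - \<delta>) / dist a b\<bar> * dist a b"
      by (simp only: norm_scaleR dist_norm)
    also have "\<dots> = (1 + (r - \<delta>) / dist a b) * dist a b"
      using d assms(2) by simp
    also have "\<dots> = dist a b + r - \<delta>"
      using d by (simp add: field_simps)
    finally show ?thesis .
  qed
  moreover fix q assume "q \<in> ball (a + ((r - \<delta>) / dist a b) *\<^sub>R (a - b)) \<delta>"
  then have "norm (q - p) < \<delta>"
    by (simp add: p_def dist_norm norm_minus_commute)
  ultimately show "q \<in> cball a r - cball b r"
    using norm_triangle_ineq[of "q - p" "p - a"] norm_triangle_ineq[of "p - q" "q - b"] assms(3)
    by (simp add: dist_norm norm_minus_commute)
qed

lemma symdiff_shift_along_subset: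
  assumes "\<And>z. \<bar>e z\<bar> \<le> d" "0 \<le> d"
  shows "(shift_along u g (shift_along u e K) - shift_along u g K) \<union> (shift_along u g K - shift_along u g (shift_along u e K))
    \<subseteq> shift_along u g (dilate_along u d K - erode_along u d K)"
proof -
  have "(shift_along u e K - K) \<union> (K - shift_along u e K) \<subseteq> dilate_along u d K - erode_along u d K"
    using shift_along_between_erode_dilate[where e = e and u = u and K = K, OF assms(1)]
      erode_along_subset[OF assms(2)] subset_dilate_along[OF assms(2)] by blast
  then show ?thesis
    unfolding shift_along_Diff[symmetric] shift_along_Un[symmetric] by (rule shift_along_mono)
qed

lemma bounded_fibre_mid:
  fixes u :: "'a::euclidean_space"
  assumes unit: "norm u = 1" and K: "compact K" "convex K"
  obtains B where "\<And>z. \<bar>fibre_mid K u z\<bar> \<le> B"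
proof -
  obtain R where R: "0 \<le> R" "\<And>p. p \<in> K \<Longrightarrow> norm p \<le> R"
    using compact_imp_bounded[OF K(1)] bounded_pos less_imp_le by metis
  have "\<bar>t\<bar> \<le> R" if t: "t \<in> fibre K u z" for t z
  proof -
    obtain p where "p \<in> K" "t = p \<bullet> u"
      using fibre_subset_image_inner[OF unit] t by blast
    then show ?thesis
      using Cauchy_Schwarz_ineq2[of p u] unit R(2) by (simp add: order_trans)
  qed
  have "\<bar>fibre_mid K u z\<bar> \<le> R" for z
  proof (cases "fibre K u z = {}")
    case False
    then have "fibre_min K u z \<in> fibre K u z" "fibre_max K u z \<in> fibre K u z"
      using fibre_eq_atLeastAtMost[OF unit K False] by auto
    then have "\<bar>fibre_min K u z\<bar> \<le> R" "\<bar>fibre_max K u z\<bar> \<le> R"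
      by (auto intro: \<open>\<And>t z. t \<in> fibre K u z \<Longrightarrow> \<bar>t\<bar> \<le> R\<close>)
    then show ?thesis
      unfolding fibre_mid_def abs_le_iff by argo
  qed (simp add: fibre_mid_def fibre_min_def fibre_max_def R(1))
  then show ?thesis
    using that by blast
qed

lemma measure_shift_along_dilate_erode:
  fixes u :: "'a::euclidean_space"
  assumes unit: "norm u = 1" and g: "g \<in> borel_measurable borel" "invariant_along u g"
    and K: "compact K" "convex K" and d: "0 \<le> d"
  shows "shift_along u g (dilate_along u d K - erode_along u d K) \<in> lmeasurable"
    and "measure lebesgue (shift_along u g (dilate_along u d K - erode_along u d K))
      = measure lebesgue (dilate_along u d K) - measure lebesgue (erode_along u d K)"
proof -
  have conv: "compact (dilate_along u d K)" "convex (dilate_along u d K)"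
    "compact (erode_along u d K)" "convex (erode_along u d K)"
    using K d by (auto intro: compact_dilate_along convex_dilate_along compact_erode_along
        convex_erode_along)
  note lm = lmeasurable_shift_along[OF unit g conv(1,2)] lmeasurable_shift_along[OF unit g conv(3,4)]
  have sub: "shift_along u g (erode_along u d K) \<subseteq> shift_along u g (dilate_along u d K)"
    using erode_along_subset[OF d] subset_dilate_along[OF d] by (intro shift_along_mono) blast
  have fin: "emeasure lebesgue (shift_along u g (dilate_along u d K)) \<noteq> \<infinity>"
    using fmeasurableD2[OF lm(1)] by (metis infinity_ennreal_def)
  show "shift_along u g (dilate_along u d K - erode_along u d K) \<in> lmeasurable"
    unfolding shift_along_Diff by (rule fmeasurable_Diff[OF lm(1) fmeasurableD[OF lm(2)]])
  show "measure lebesgue (shift_along u g (dilate_along u d K - erode_along u d K))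
      = measure lebesgue (dilate_along u d K) - measure lebesgue (erode_along u d K)"
    unfolding shift_along_Diff measure_Diff[OF fin fmeasurableD[OF lm(1)] fmeasurableD[OF lm(2)] sub]
    using measure_shift_along[OF unit g conv(1,2)] measure_shift_along[OF unit g conv(3,4)] by simp
qed

text \<open>The shift for \<open>\<phi>\<^sub>k\<close> is the shift for \<open>\<phi>\<close> after a shift by \<open>\<phi>\<^sub>k - \<phi>\<close> at the chord midpoints;
  the latter is uniformly small because Lipschitz functions converge uniformly on the bounded
  range of the midpoints.\<close>
lemma tendsto_measure_symdiff_chord_shift:
  fixes u :: "'a::euclidean_space"
  assumes unit: "norm u = 1" and lip: "\<And>k. 1-lipschitz_on UNIV (\<phi>s k)" "1-lipschitz_on UNIV \<phi>"
    and lim: "\<And>t. (\<lambda>k. \<phi>s k t) \<longlonglongrightarrow> \<phi> t" and K: "compact K" "convex K"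
  shows "(\<lambda>k. emeasure lebesgue ((chord_shift u (\<phi>s k) K - chord_shift u \<phi> K) \<union>
      (chord_shift u \<phi> K - chord_shift u (\<phi>s k) K))) \<longlonglongrightarrow> 0"
proof -
  define g where "g z = \<phi> (fibre_mid K u z) - fibre_mid K u z" for z
  define e where "e k z = \<phi>s k (fibre_mid K u z) - \<phi> (fibre_mid K u z)" for k z
  define SD where "SD k = (chord_shift u (\<phi>s k) K - chord_shift u \<phi> K) \<union>
      (chord_shift u \<phi> K - chord_shift u (\<phi>s k) K)" for k
  have [measurable]: "fibre_mid K u \<in> borel_measurable borel" "\<phi> \<in> borel_measurable borel"
    using borel_measurable_fibre_mid[OF unit K(1)]
      borel_measurable_continuous_onI[OF lipschitz_on_continuous_on[OF lip(2)]] .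
  have g: "g \<in> borel_measurable borel" "invariant_along u g"
    using invariant_along_fibre_mid[OF unit, of "\<lambda>m. \<phi> m - m"] by (simp_all add: g_def[abs_def])
  have base: "chord_shift u \<phi> K = shift_along u g K"
    by (simp add: chord_shift_def g_def[abs_def])
  have shifted: "chord_shift u (\<phi>s k) K = shift_along u g (shift_along u (e k) K)" for k
    using invariant_along_fibre_mid[OF unit, of "\<lambda>m. \<phi>s k m - \<phi> m"]
    by (simp add: chord_shift_def shift_along_shift_along g_def e_def[abs_def])
  have lm: "chord_shift u (\<phi>s k) K \<in> lmeasurable" "chord_shift u \<phi> K \<in> lmeasurable" for k
    using lip by (auto intro!: lmeasurable_chord_shift[OF unit _ K] lipschitz_on_continuous_on)
  have SD_lm: "SD k \<in> lmeasurable" for k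
    unfolding SD_def using lm(1)[of k] lm(2) by (intro fmeasurable.Un fmeasurable_Diff) (auto intro: fmeasurableD)
  obtain B where B: "\<And>z. \<bar>fibre_mid K u z\<bar> \<le> B"
    using bounded_fibre_mid[OF unit K] by blast
  have unif: "uniform_limit {-B..B} \<phi>s \<phi> sequentially"
    using lip by (intro uniform_limit_of_lipschitz[OF compact_Icc] lim) (auto intro: lipschitz_on_subset)
  have "(\<lambda>k. measure lebesgue (SD k)) \<longlonglongrightarrow> 0"
  proof (rule tendstoI)
    fix r :: real assume "0 < r"
    let ?d = "\<lambda>j. 1 / real (Suc j)"
    have "(\<lambda>j. measure lebesgue (dilate_along u (?d j) K) - measure lebesgue (erode_along u (?d j) K))
        \<longlonglongrightarrow> 0"
      using tendsto_diff[OF tendsto_measure_dilate_along[OF unit K(1)]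
          tendsto_measure_erode_along[OF unit K]] by simp
    then obtain j where j: "measure lebesgue (dilate_along u (?d j) K) - measure lebesgue (erode_along u (?d j) K) < r"
      using \<open>0 < r\<close> by (metis (no_types, lifting) order_tendstoD(2) eventually_sequentially order_refl)
    have "\<forall>\<^sub>F k in sequentially. \<forall>t\<in>{-B..B}. dist (\<phi>s k t) (\<phi> t) < ?d j"
      using unif by (simp add: uniform_limit_iff)
    then show "\<forall>\<^sub>F k in sequentially. dist (measure lebesgue (SD k)) 0 < r"
    proof (rule eventually_mono)
      fix k assume close: "\<forall>t\<in>{-B..B}. dist (\<phi>s k t) (\<phi> t) < ?d j"
      have "\<bar>e k z\<bar> \<le> ?d j" for z
      proof -
        have "fibre_mid K u z \<in> {-B..B}"
          using B[of z] by (simp add: abs_le_iff)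
        then show ?thesis
          using close by (force simp: e_def dist_real_def)
      qed
      then have "SD k \<subseteq> shift_along u g (dilate_along u (?d j) K - erode_along u (?d j) K)"
        unfolding SD_def shifted base by (intro symdiff_shift_along_subset) simp_all
      then have "measure lebesgue (SD k) \<le>
          measure lebesgue (dilate_along u (?d j) K) - measure lebesgue (erode_along u (?d j) K)"
        using measure_shift_along_dilate_erode[OF unit g K, of "?d j"] SD_lm
        by (metis fmeasurableD measure_mono_fmeasurable of_nat_0_le_iff zero_le_divide_1_iff)
      then show "dist (measure lebesgue (SD k)) 0 < r"
        using j by simp
    qed
  qed
  then have "(\<lambda>k. ennreal (measure lebesgue (SD k))) \<longlonglongrightarrow> 0"
    using tendsto_ennrealI[of _ 0] by simp
  moreover have "(\<lambda>k. emeasure lebesgue (SD k)) = (\<lambda>k. ennreal (measure lebesgue (SD k)))"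
    by (rule ext, rule emeasure_eq_ennreal_measure[OF fmeasurableD2[OF SD_lm]])
  ultimately show ?thesis
    unfolding SD_def by simp
qed

lemma map_conv_unique:
  assumes conv: "map_conv Ds D" "map_conv Ds D'" and K: "convex_body K"
    and sets: "D K \<in> sets lebesgue" "D' K \<in> sets lebesgue" "\<And>k. Ds k K \<in> sets lebesgue"
  shows "ae_eq (D' K) (D K)"
proof -
  let ?e = "\<lambda>k. emeasure lebesgue (sym_diff (Ds k K) (D K)) + emeasure lebesgue (sym_diff (Ds k K) (D' K))"
  have "?e \<longlonglongrightarrow> 0 + 0"
    using conv K unfolding map_conv_def by (intro tendsto_add) auto
  moreover have "emeasure lebesgue (sym_diff (D' K) (D K)) \<le> ?e k" for k
  proof -
    have "emeasure lebesgue (sym_diff (D' K) (D K))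
        \<le> emeasure lebesgue (sym_diff (Ds k K) (D K) \<union> sym_diff (Ds k K) (D' K))"
      using sets by (intro emeasure_mono) auto
    also have "\<dots> \<le> ?e k"
      using sets by (intro emeasure_subadditive) auto
    finally show ?thesis .
  qed
  ultimately have "emeasure lebesgue (sym_diff (D' K) (D K)) \<le> 0"
    by (intro LIMSEQ_le_const[of ?e]) auto
  then have "sym_diff (D' K) (D K) \<in> null_sets lebesgue"
    using sets by auto
  then show ?thesis
    unfolding ae_eq_def ae_subset_def by (auto intro: completion.complete2)
qed

lemma tendsto_contraction_of_map_conv:
  fixes u :: "'a::euclidean_space"
  assumes unit: "norm u = 1" and D: "\<And>k. Ds k \<in> JH u t0"
    and \<phi>s: "\<And>k. assoc_contraction u (Ds k) (\<phi>s k)" and conv: "map_conv Ds (Ds 0)"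
  shows "(\<lambda>k. \<phi>s k t) \<longlonglongrightarrow> \<phi>s 0 t"
proof (rule tendstoI)
  fix \<epsilon> :: real assume "0 < \<epsilon>"
  define \<delta> where "\<delta> = min 1 \<epsilon> / 2"
  have \<delta>: "0 < \<delta>" "\<delta> \<le> 1" "2 * \<delta> \<le> \<epsilon>"
    using \<open>0 < \<epsilon>\<close> by (auto simp: \<delta>_def)
  define K where "K = cball (t *\<^sub>R u) 1"
  have K: "convex_body K"
    by (simp add: K_def convex_body_cball)
  let ?B = "\<lambda>k. cball (\<phi>s k t *\<^sub>R u) 1"
  have ball: "ae_eq (Ds k K) (?B k)" for k
    using JH_cball[OF unit D[of k] \<phi>s[of k] zero_less_one, of "t *\<^sub>R u"] unit
    by (simp add: K_def proj_perp_def)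
  have eq: "emeasure lebesgue (sym_diff (Ds k K) (Ds 0 K)) = emeasure lebesgue (sym_diff (?B k) (?B 0))" for k
    using JH_lmeasurable[OF D K] ball by (intro emeasure_symdiff_ae_cong) (auto intro: fmeasurableD)
  define c where "c = emeasure lebesgue (ball (0::'a) \<delta>)"
  have c: "emeasure lebesgue (ball p \<delta>) = c" for p :: 'a
    using \<delta>(1) by (simp add: c_def emeasure_ball)
  have "0 < c"
    using \<delta>(1) by (simp add: c_def emeasure_ball)
  then have "\<forall>\<^sub>F k in sequentially. emeasure lebesgue (sym_diff (Ds k K) (Ds 0 K)) < c"
    using conv K unfolding map_conv_def by (intro order_tendstoD(2)) auto
  then show "\<forall>\<^sub>F k in sequentially. dist (\<phi>s k t) (\<phi>s 0 t) < \<epsilon>"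
  proof (rule eventually_mono)
    fix k assume small: "emeasure lebesgue (sym_diff (Ds k K) (Ds 0 K)) < c"
    show "dist (\<phi>s k t) (\<phi>s 0 t) < \<epsilon>"
    proof (rule ccontr)
      assume "\<not> dist (\<phi>s k t) (\<phi>s 0 t) < \<epsilon>"
      then have "2 * \<delta> \<le> dist (\<phi>s k t *\<^sub>R u) (\<phi>s 0 t *\<^sub>R u)"
        using unit \<delta>(3) by (simp add: dist_norm dist_real_def flip: scaleR_diff_left)
      then obtain p where "ball p \<delta> \<subseteq> sym_diff (?B k) (?B 0)"
        using ball_subset_cball_diff[OF \<delta>(1,2)] by blast
      moreover have "sym_diff (?B k) (?B 0) \<in> sets lebesgue"
        by (intro sets.Un sets.Diff fmeasurableD[OF lmeasurable_cball])
      ultimately have "c \<le> emeasure lebesgue (sym_diff (?B k) (?B 0))"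
        unfolding c[of p, symmetric] by (rule emeasure_mono)
      then show False
        using small eq[of k] by (metis leD)
    qed
  qed
qed

theorem lemma6p1:
  fixes u :: "'a::euclidean_space" and t0 :: real
    and Ds :: "nat \<Rightarrow> 'a set \<Rightarrow> 'a set" and phis :: "nat \<Rightarrow> real \<Rightarrow> real"
  assumes "DIM('a) \<ge> 2"
    and "norm u = 1"
    and "\<And>k. Ds k \<in> JH u t0"
    and "\<And>k. assoc_contraction u (Ds k) (phis k)"
  shows "(map_conv Ds (Ds 0) \<longrightarrow> (\<forall>t. (\<lambda>k. phis k t) \<longlonglongrightarrow> phis 0 t))
    \<and> (\<forall>phi. (\<forall>t. (\<lambda>k. phis k t) \<longlonglongrightarrow> phi t) \<longrightarrow>
          (\<exists>D. D \<in> JH u t0 \<and> assoc_contraction u D phi \<and> map_conv Ds D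
             \<and> (\<forall>D'. D' \<in> JH u t0 \<and> assoc_contraction u D' phi \<and> map_conv Ds D'
                   \<longrightarrow> (\<forall>K. convex_body K \<longrightarrow> ae_eq (D' K) (D K)))))"
proof (intro conjI impI allI)
  fix t assume "map_conv Ds (Ds 0)"
  then show "(\<lambda>k. phis k t) \<longlonglongrightarrow> phis 0 t"
    by (rule tendsto_contraction_of_map_conv[OF assms(2-4)])
next
  fix phi assume lim: "\<forall>t. (\<lambda>k. phis k t) \<longlonglongrightarrow> phi t"
  have lip: "1-lipschitz_on UNIV (phis k)" for k
    by (rule lipschitz_contraction[OF assms(2-4)])
  have lip_phi: "1-lipschitz_on UNIV phi"
    using lim by (intro lipschitz_on_pointwise_limit[where f = phis, OF lip]) simp
  have conv: "map_conv Ds (chord_shift u phi)"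
    unfolding map_conv_def
  proof (intro allI impI)
    fix K :: "'a set" assume K: "convex_body K"
    then have Kc: "compact K" "convex K"
      by (auto simp: convex_body_def)
    have "emeasure lebesgue (sym_diff (Ds k K) (chord_shift u phi K))
        = emeasure lebesgue (sym_diff (chord_shift u (phis k) K) (chord_shift u phi K))" for k
      using fmeasurableD[OF JH_lmeasurable[OF assms(3) K]]
        fmeasurableD[OF lmeasurable_chord_shift[OF assms(2) lipschitz_on_continuous_on[OF lip] Kc]]
        fmeasurableD[OF lmeasurable_chord_shift[OF assms(2) lipschitz_on_continuous_on[OF lip_phi] Kc]]
        ae_eq_chord_shift[OF assms(2-4) K] ae_eq_refl
      by (intro emeasure_symdiff_ae_cong)
    then show "(\<lambda>k. emeasure lebesgue (sym_diff (Ds k K) (chord_shift u phi K))) \<longlonglongrightarrow> 0"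
      using tendsto_measure_symdiff_chord_shift[OF assms(2) lip lip_phi _ Kc] lim by simp
  qed
  show "\<exists>D. D \<in> JH u t0 \<and> assoc_contraction u D phi \<and> map_conv Ds D
      \<and> (\<forall>D'. D' \<in> JH u t0 \<and> assoc_contraction u D' phi \<and> map_conv Ds D'
            \<longrightarrow> (\<forall>K. convex_body K \<longrightarrow> ae_eq (D' K) (D K)))"
  proof (intro exI conjI allI impI)
    show "chord_shift u phi \<in> JH u t0" "assoc_contraction u (chord_shift u phi) phi"
      using chord_shift_in_JH[OF assms(2) lip_phi] assoc_contraction_chord_shift[OF assms(2)] .
    show "map_conv Ds (chord_shift u phi)"
      by (rule conv)
    fix D' and K :: "'a set" assume D': "D' \<in> JH u t0 \<and> assoc_contraction u D' phi \<and> map_conv Ds D'"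
      and K: "convex_body K"
    show "ae_eq (D' K) (chord_shift u phi K)"
      using D' fmeasurableD[OF JH_lmeasurable[OF _ K]] chord_shift_in_JH[OF assms(2) lip_phi] assms(3)
      by (intro map_conv_unique[OF conv _ K]) blast+
  qed
qed

end
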